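(* Let $W=\langle \mathcal{D},\mathcal{N},\mathrm{wr},\mathrm{gd}\rangle$ be a (1-safe) DAW-net and let $\mathit{RG}_W=(T,\overline{S},\overline{s}_0,\overline{\delta})$ be its reachability graph. Let $\mathrm{bc}(W)$ be the $\mathcal{BC}$ action description encoding $W$ and $\mathit{TS}_{\mathrm{bc}(W)}$ the transition system induced by $\mathrm{bc}(W)$ (all as defined in the context). Then $\mathit{TS}_{\mathrm{bc}(W)}$ and $\mathit{RG}_W$ are trace equivalent.
   Context: **Data model and guards.** A data model is $\mathcal{D}=(\mathcal{V},\Delta,\mathrm{dm},\mathrm{ord})$: $\mathcal{V}$ is a set of variables; $\Delta=\{\Delta_1,\dots,\Delta_n\}$ is a set of (not necessarily disjoint) domains; $\mathrm{dm}:\mathcal{V}\to\Delta$ is total and surjective and assigns to each variable its finite domain; $\mathrm{ord}$ is a partial function which, for a domain $\Delta_i$ on which it is defined, returns a partial order $\le_{\Delta_i}\subseteq\Delta_i\times\Delta_i$. An assignment is a partial function $\eta$ on $\mathcal{V}$ with $\eta(v)\in\mathrm{dm}(v)$ whenever $\eta(v)$ is defined. Guards are given by the grammar $\Phi ::= \mathit{true}\mid \mathrm{def}(v)\mid t_1=t_2\mid t_1\le t_2\mid \neg\Phi\mid \Phi\wedge\Phi$, where $v\in\mathcal{V}$ and $t_1,t_2\in\mathcal{V}\cup\bigcup_i\Delta_i$. Write $t[\eta]$ for $\eta(t)$ if $t$ is a variable on which $\eta$ is defined, and $t$ otherwise. Then $\mathcal{D},\eta\models\mathit{true}$; $\mathcal{D},\eta\models\mathrm{def}(v)$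 iff $\eta(v)$ is defined; $\mathcal{D},\eta\models t_1=t_2$ iff $t_1[\eta],t_2[\eta]\notin\mathcal{V}$ and $t_1[\eta]=t_2[\eta]$; $\mathcal{D},\eta\models t_1\le t_2$ iff $t_1[\eta],t_2[\eta]\in\Delta_i$ for some $i$ with $\mathrm{ord}(\Delta_i)$ defined and $t_1[\eta]\le_{\Delta_i}t_2[\eta]$; negation and conjunction are classical. **DAW-nets.** A Petri net is $\mathcal{N}=(P,T,F)$ with $F\subseteq(P\times T)\cup(T\times P)$; ${}^\bullet t=\{p\mid (p,t)\in F\}$, $t^\bullet=\{p\mid (t,p)\in F\}$; a marking is $M:P\to\mathbb{N}$. $\mathcal{N}$ is a workflow net with a distinguished place $\mathit{start}$ (no incoming arcs) and a distinguished place $\mathit{sink}$. A DAW-net is $W=\langle\mathcal{D},\mathcal{N},\mathrm{wr},\mathrm{gd}\rangle$ where $\mathrm{wr}$ maps each $t\in T$ to a partial function $\mathrm{wr}(t)$ from $\mathcal{V}$ with $\mathrm{wr}(t)(v)\subseteq\mathrm{dm}(v)$, and $\mathrm{gd}$ maps each $t$ to a guard. A state is a pair $(M,\eta)$. A firing $(M,\eta)\xrightarrow{t}(M',\eta')$ is valid iff: $\{p\mid M(p)>0\}\supseteq{}^\bullet t$; $\mathcal{D},\eta\models\mathrm{gd}(t)$; $M'(p)=M(p)-1$ if $p\in{}^\bullet t\setminus t^\bullet$, $M'(p)=M(p)+1$ if $p\in t^\bullet\setminus{}^\bullet t$, $M'(p)=M(p)$ otherwise; $\mathrm{dom}(\eta')=\mathrm{dom}(\eta)\cup\{v\mid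 \mathrm{wr}(t)(v)\neq\emptyset\}\setminus\{v\mid\mathrm{wr}(t)(v)=\emptyset\}$ and for $v\in\mathrm{dom}(\eta')$, $\eta'(v)\in\mathrm{wr}(t)(v)$ if $v\in\mathrm{dom}(\mathrm{wr}(t))$ and $\eta'(v)=\eta(v)$ otherwise. The initial state is $(M_s,\eta_s)$ with $M_s(\mathit{start})=1$, $M_s(p)=0$ for other $p$, and $\eta_s$ empty. Standing assumption: $W$ is 1-safe (in every state reachable from the initial state each place holds at most one token). $\mathcal{V}'$ is the finite set of variables appearing in $W$, and $\mathrm{adm}(v)=\bigcup_{t\in T}\mathrm{wr}(t)(v)$ is the active domain of $v$. **Reachability graph.** $\mathit{RG}_W=(T,\overline{S},\overline{s}_0,\overline{\delta})$ with $\overline{s}_0=(M_s,\eta_s)$, where $\overline{S}$ and $\overline{\delta}\subseteq\overline{S}\times T\times\overline{S}$ are the least sets such that $\overline{s}_0\in\overline{S}$ and, if $(M,\eta)\in\overline{S}$ and $(M,\eta)\xrightarrow{t}(M',\eta')$ is valid, then $(M',\eta')\in\overline{S}$ and $((M,\eta),t,(M',\eta'))\in\overline{\delta}$. **Trace equivalence.** A path of a labelled transition system is a sequence $s_0\xrightarrow{l_1}s_1\cdots\xrightarrow{l_n}s_n$ ($n\ge0$) starting in an initial state and following its transitions. $\mathit{RG}$ and a transition system $\mathit{TS}$ are trace equivalent iff there is an injective function $\mathrm{enc}$ from the states and transitions of $\mathit{RG}$ to the states and transition labels of $\mathit{TS}$ such that (1) for every path $s_0\xrightarrow{t_1}\cdots\xrightarrow{t_n}s_n$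 of $\mathit{RG}$, $\mathrm{enc}(s_0)\xrightarrow{\mathrm{enc}(t_1)}\cdots\xrightarrow{\mathrm{enc}(t_n)}\mathrm{enc}(s_n)$ is a path of $\mathit{TS}$; and (2) for every path $s'_0\xrightarrow{t'_1}\cdots\xrightarrow{t'_n}s'_n$ of $\mathit{TS}$ there is a path $s_0\xrightarrow{t_1}\cdots\xrightarrow{t_n}s_n$ of $\mathit{RG}$ with $\mathrm{enc}(s_i)=s'_i$ for $0\le i\le n$ and $\mathrm{enc}(t_i)=t'_i$ for $1\le i\le n$. **The action language $\mathcal{BC}$.** A description $B$ has fluent constants, each with a finite domain of size $\ge 2$ (Boolean fluents have domain $\{\mathrm{true},\mathrm{false}\}$), and action constants; an atom is $f=v$ with $v$ in the domain of $f$. Dynamic laws are "$A_0$ after $A'_1,\dots,A'_n$ ifcons $A_{n+1},\dots,A_m$" ($A_0,A_{n+1},\dots,A_m$ atoms or $A_0=\mathrm{false}$; $A'_j$ atoms or action constants), static laws "$A_0$ if $A_1,\dots,A_n$ ifcons $A_{n+1},\dots,A_m$", and "initially $A$". For $\ell\ge0$, $P_\ell(B)$ is the disjunctive logic program with classical negation $\neg$ and default negation $\sim$ over atoms $i{:}A$ containing: for each static law and $0\le i\le\ell$, $i{:}A_0\leftarrow i{:}A_1,\dots,i{:}A_n,\sim\neg(i{:}A_{n+1}),\dots,\sim\neg(i{:}A_m)$; for each dynamic law and $0\le i<\ell$, $i{+}1{:}A_0\leftarrow i{:}A'_1,\dots,i{:}A'_n,\sim\neg(i{+}1{:}A_{n+1}),\dots,\sim\neg(i{+}1{:}A_m)$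 (a constraint when $A_0=\mathrm{false}$); for each "initially $f=v$", the fact $0{:}f=v$; $0{:}f=v\vee\neg(0{:}f=v)$ for each fluent $f$ and value $v$; $i{:}a\vee\neg(i{:}a)$ for each action constant $a$ and $i<\ell$; and for each fluent $f$ and $i\le\ell$, $\leftarrow\sim(i{:}f=v_1),\dots,\sim(i{:}f=v_k)$ (where $v_1,\dots,v_k$ is its domain) and $\neg(i{:}f=v)\leftarrow i{:}f=w$ for $v\neq w$. For a stable model (answer set) $X$ of $P_\ell(B)$ let $\sigma_i(X)=\{f\mapsto o\mid (i{:}f=o)\in X\}$. The transition system $\mathit{TS}_{B}=(\mathcal{A},S,S_0,\delta)$ ($\mathcal{A}$ the action constants, transitions labelled by subsets of $\mathcal{A}$) has $S_0=\{\sigma_0(X)\mid X$ a stable model of $P_0(B)\}$, and $S,\delta$ are the least sets with $S_0\subseteq S$ such that whenever $X$ is a stable model of $P_{\ell+1}(B)$ for some $\ell\ge0$ with $\sigma_\ell(X)\in S$, then $\sigma_{\ell+1}(X)\in S$ and $(\sigma_\ell(X),\{a\mid (\ell{:}a)\in X\},\sigma_{\ell+1}(X))\in\delta$. **The encoding $\mathrm{bc}(W)$.** Fluents: for each $v\in\mathcal{V}'$ a fluent $v$ with domain $\mathrm{adm}(v)\cup\{\mathrm{null}\}$; for each $p\in P$ a Boolean fluent $p$; a Boolean fluent $\mathit{trans}$. Action constants: the transitions $t\in T$. Laws: "$v=o$ after $v=o$ ifcons $v=o$" for $v\in\mathcal{V}'$, $o\in\mathrm{adm}(v)\cup\{\mathrm{null}\}$;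 "$p=o$ after $p=o$ ifcons $p=o$" for $p\in P$, $o\in\{\mathrm{true},\mathrm{false}\}$; for each $t\in T$: "$p=\mathrm{false}$ after $t$" for $p\in{}^\bullet t\setminus t^\bullet$; "$p=\mathrm{true}$ after $t$" for $p\in t^\bullet\setminus{}^\bullet t$; "$v=d$ after $t$ ifcons $v=d$" for $d\in\mathrm{wr}(t)(v)$; "$v=\mathrm{null}$ after $t$" for $v$ with $\mathrm{wr}(t)(v)=\emptyset$; "false after $t$ ifcons $v=d$" for $v$ with $\mathrm{wr}(t)(v)\neq\emptyset$ and $d\in\{\mathrm{null}\}\cup\mathrm{adm}(v)\setminus\mathrm{wr}(t)(v)$; "false after $t,s$" for $t\neq s$; "false after $t,p=\mathrm{false}$" for $p\in{}^\bullet t$; "$\mathit{trans}=\mathrm{true}$ after $t$"; "initially $\mathit{start}=\mathrm{true}$", "initially $p=\mathrm{false}$" for $p\neq\mathit{start}$, "initially $v=\mathrm{null}$" for $v\in\mathcal{V}'$, "initially $\mathit{trans}=\mathrm{true}$". Guards: a DNF characterisation of a guard $\Phi$ is a formula $\bigvee_{i=1}^k t^i_1\wedge\dots\wedge t^i_{\ell_i}$ equivalent to $\Phi$ over the data model, each term $t^i_j$ being of the form $v=o$ or $\neg\mathrm{def}(v)$; its translation replaces $v=o$ by the atom $v=o$ and $\neg\mathrm{def}(v)$ by $v=\mathrm{null}$ (write $[\![\cdot]\!]$). For each $t$ with $\mathrm{gd}(t)\not\equiv\mathit{true}$, taking such a characterisation of $\neg\mathrm{gd}(t)$, $\mathrm{bc}(W)$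 contains "false after $t,[\![t^i_1]\!],\dots,[\![t^i_{\ell_i}]\!]$" for each $i=1,\dots,k$. *)

theory Defs
  imports Main
begin

record ('v, 'd) data_model =
  dvars :: "'v set"
  ddoms :: "'d set set"
  ddm   :: "'v \<Rightarrow> 'd set"
  dord  :: "'d set \<Rightarrow> ('d \<times> 'd) set option"

definition wf_data_model :: "('v, 'd) data_model \<Rightarrow> bool" where
  "wf_data_model D \<longleftrightarrow>
     finite (dvars D) \<and> finite (ddoms D) \<and>
     (\<forall>v \<in> dvars D. ddm D v \<in> ddoms D \<and> finite (ddm D v)) \<and>
     (\<forall>Di \<in> ddoms D. \<exists>v \<in> dvars D. ddm D v = Di) \<and>
     (\<forall>Di \<in> ddoms D. \<forall>r. dord D Di = Some r \<longrightarrow> r \<subseteq> Di \<times> Di \<and> partial_order_on Di r)"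

definition assignment :: "('v, 'd) data_model \<Rightarrow> ('v \<rightharpoonup> 'd) \<Rightarrow> bool" where
  "assignment D \<eta> \<longleftrightarrow> dom \<eta> \<subseteq> dvars D \<and> (\<forall>v d. \<eta> v = Some d \<longrightarrow> d \<in> ddm D v)"

datatype ('v, 'd) gterm = GVar 'v | GConst 'd

datatype ('v, 'd) guard =
    GTrue
  | GDef 'v
  | GEq "('v, 'd) gterm" "('v, 'd) gterm"
  | GLe "('v, 'd) gterm" "('v, 'd) gterm"
  | GNot "('v, 'd) guard"
  | GAnd "('v, 'd) guard" "('v, 'd) guard"

fun teval :: "('v \<rightharpoonup> 'd) \<Rightarrow> ('v, 'd) gterm \<Rightarrow> ('v, 'd) gterm" where
  "teval \<eta> (GVar v) = (case \<eta> v of Some d \<Rightarrow> GConst d | None \<Rightarrow> GVar v)"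
| "teval \<eta> (GConst d) = GConst d"

fun holds :: "('v, 'd) data_model \<Rightarrow> ('v \<rightharpoonup> 'd) \<Rightarrow> ('v, 'd) guard \<Rightarrow> bool" where
  "holds D \<eta> GTrue = True"
| "holds D \<eta> (GDef v) = (\<eta> v \<noteq> None)"
| "holds D \<eta> (GEq t1 t2) =
     (\<exists>c1 c2. teval \<eta> t1 = GConst c1 \<and> teval \<eta> t2 = GConst c2 \<and> c1 = c2)"
| "holds D \<eta> (GLe t1 t2) =
     (\<exists>c1 c2 Di r. teval \<eta> t1 = GConst c1 \<and> teval \<eta> t2 = GConst c2 \<and>
        Di \<in> ddoms D \<and> dord D Di = Some r \<and> c1 \<in> Di \<and> c2 \<in> Di \<and> (c1, c2) \<in> r)"
| "holds D \<eta> (GNot g) = (\<not> holds D \<eta> g)"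
| "holds D \<eta> (GAnd g1 g2) = (holds D \<eta> g1 \<and> holds D \<eta> g2)"

fun gterm_vars :: "('v, 'd) gterm \<Rightarrow> 'v set" where
  "gterm_vars (GVar v) = {v}"
| "gterm_vars (GConst d) = {}"

fun gterm_consts :: "('v, 'd) gterm \<Rightarrow> 'd set" where
  "gterm_consts (GVar v) = {}"
| "gterm_consts (GConst d) = {d}"

fun guard_vars :: "('v, 'd) guard \<Rightarrow> 'v set" where
  "guard_vars GTrue = {}"
| "guard_vars (GDef v) = {v}"
| "guard_vars (GEq t1 t2) = gterm_vars t1 \<union> gterm_vars t2"
| "guard_vars (GLe t1 t2) = gterm_vars t1 \<union> gterm_vars t2"
| "guard_vars (GNot g) = guard_vars g"
| "guard_vars (GAnd g1 g2) = guard_vars g1 \<union> guard_vars g2"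

fun guard_consts :: "('v, 'd) guard \<Rightarrow> 'd set" where
  "guard_consts GTrue = {}"
| "guard_consts (GDef v) = {}"
| "guard_consts (GEq t1 t2) = gterm_consts t1 \<union> gterm_consts t2"
| "guard_consts (GLe t1 t2) = gterm_consts t1 \<union> gterm_consts t2"
| "guard_consts (GNot g) = guard_consts g"
| "guard_consts (GAnd g1 g2) = guard_consts g1 \<union> guard_consts g2"

definition guard_valid :: "('v, 'd) data_model \<Rightarrow> ('v, 'd) guard \<Rightarrow> bool" where
  "guard_valid D g \<longleftrightarrow> (\<forall>\<eta>. assignment D \<eta> \<longrightarrow> holds D \<eta> g)"

record ('v, 'd, 'p, 't) dawnet =
  dmodel :: "('v, 'd) data_model"
  places :: "'p set"
  transs :: "'t set"
  arcs_pt :: "('p \<times> 't) set"     (* the part of F in P x T *)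
  arcs_tp :: "('t \<times> 'p) set"     (* the part of F in T x P *)
  pstart :: 'p
  psink :: 'p
  wr :: "'t \<Rightarrow> 'v \<Rightarrow> 'd set option"
  gd :: "'t \<Rightarrow> ('v, 'd) guard"

definition preset :: "('v, 'd, 'p, 't) dawnet \<Rightarrow> 't \<Rightarrow> 'p set" where
  "preset W t = {p. (p, t) \<in> arcs_pt W}"

definition postset :: "('v, 'd, 'p, 't) dawnet \<Rightarrow> 't \<Rightarrow> 'p set" where
  "postset W t = {p. (t, p) \<in> arcs_tp W}"

definition wf_dawnet :: "('v, 'd, 'p, 't) dawnet \<Rightarrow> bool" where
  "wf_dawnet W \<longleftrightarrow>
     wf_data_model (dmodel W) \<and>
     finite (places W) \<and> finite (transs W) \<and>
     arcs_pt W \<subseteq> places W \<times> transs W \<and> arcs_tp W \<subseteq> transs W \<times> places W \<and>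
     pstart W \<in> places W \<and> psink W \<in> places W \<and>
     (\<forall>t. (t, pstart W) \<notin> arcs_tp W) \<and>
     (\<forall>t \<in> transs W. dom (wr W t) \<subseteq> dvars (dmodel W) \<and>
        (\<forall>v S. wr W t v = Some S \<longrightarrow> S \<subseteq> ddm (dmodel W) v)) \<and>
     (\<forall>t \<in> transs W. guard_vars (gd W t) \<subseteq> dvars (dmodel W) \<and>
        guard_consts (gd W t) \<subseteq> \<Union> (ddoms (dmodel W)))"

type_synonym ('v, 'd, 'p) dstate = "('p \<Rightarrow> nat) \<times> ('v \<rightharpoonup> 'd)"

definition valid_firing ::
  "('v, 'd, 'p, 't) dawnet \<Rightarrow> ('v, 'd, 'p) dstate \<Rightarrow> 't \<Rightarrow> ('v, 'd, 'p) dstate \<Rightarrow> bool" where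
  "valid_firing W s t s' \<longleftrightarrow>
     (case s of (M, \<eta>) \<Rightarrow> case s' of (M', \<eta>') \<Rightarrow>
       t \<in> transs W \<and>
       preset W t \<subseteq> {p. M p > 0} \<and>
       holds (dmodel W) \<eta> (gd W t) \<and>
       (\<forall>p. M' p = (if p \<in> preset W t - postset W t then M p - 1
                    else if p \<in> postset W t - preset W t then M p + 1
                    else M p)) \<and>
       dom \<eta>' = (dom \<eta> \<union> {v. \<exists>S. wr W t v = Some S \<and> S \<noteq> {}}) - {v. wr W t v = Some {}} \<and>
       (\<forall>v \<in> dom \<eta>'. (v \<in> dom (wr W t) \<longrightarrow> the (\<eta>' v) \<in> the (wr W t v)) \<and>
                      (v \<notin> dom (wr W t) \<longrightarrow> \<eta>' v = \<eta> v)))"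

definition init_marking :: "('v, 'd, 'p, 't) dawnet \<Rightarrow> 'p \<Rightarrow> nat" where
  "init_marking W = (\<lambda>p. if p = pstart W then 1 else 0)"

definition rg_init :: "('v, 'd, 'p, 't) dawnet \<Rightarrow> ('v, 'd, 'p) dstate" where
  "rg_init W = (init_marking W, Map.empty)"

inductive_set rg_states :: "('v, 'd, 'p, 't) dawnet \<Rightarrow> ('v, 'd, 'p) dstate set"
  for W where
  rg_init_in: "rg_init W \<in> rg_states W"
| rg_step: "s \<in> rg_states W \<Longrightarrow> valid_firing W s t s' \<Longrightarrow> s' \<in> rg_states W"

definition rg_delta :: "('v, 'd, 'p, 't) dawnet \<Rightarrow> (('v, 'd, 'p) dstate \<times> 't \<times> ('v, 'd, 'p) dstate) set" where
  "rg_delta W = {(s, t, s'). s \<in> rg_states W \<and> valid_firing W s t s'}"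

definition one_safe :: "('v, 'd, 'p, 't) dawnet \<Rightarrow> bool" where
  "one_safe W \<longleftrightarrow> (\<forall>s \<in> rg_states W. \<forall>p \<in> places W. fst s p \<le> 1)"

definition Vprime :: "('v, 'd, 'p, 't) dawnet \<Rightarrow> 'v set" where
  "Vprime W = (\<Union>t \<in> transs W. dom (wr W t) \<union> guard_vars (gd W t))"

definition adm :: "('v, 'd, 'p, 't) dawnet \<Rightarrow> 'v \<Rightarrow> 'd set" where
  "adm W v = (\<Union>t \<in> transs W. case wr W t v of None \<Rightarrow> {} | Some S \<Rightarrow> S)"

fun lts_run :: "('s \<times> 'l \<times> 's) set \<Rightarrow> 's \<Rightarrow> ('l \<times> 's) list \<Rightarrow> bool" where
  "lts_run \<delta> s [] = True"
| "lts_run \<delta> s ((l, s') # xs) = ((s, l, s') \<in> \<delta> \<and> lts_run \<delta> s' xs)"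

text \<open>A path s0 -l1-> s1 ... -ln-> sn, given by s0 and the list [(l1,s1),...,(ln,sn)].\<close>
definition lts_path :: "'s set \<Rightarrow> ('s \<times> 'l \<times> 's) set \<Rightarrow> 's \<Rightarrow> ('l \<times> 's) list \<Rightarrow> bool" where
  "lts_path I \<delta> s0 xs \<longleftrightarrow> s0 \<in> I \<and> lts_run \<delta> s0 xs"

definition trace_equivalent ::
  "'s1 set \<Rightarrow> 's1 set \<Rightarrow> 'l1 set \<Rightarrow> ('s1 \<times> 'l1 \<times> 's1) set \<Rightarrow>
   's2 set \<Rightarrow> ('s2 \<times> 'l2 \<times> 's2) set \<Rightarrow> bool" where
  "trace_equivalent I1 S1 L1 \<delta>1 I2 \<delta>2 \<longleftrightarrow>
     (\<exists>encS :: 's1 \<Rightarrow> 's2. \<exists>encL :: 'l1 \<Rightarrow> 'l2.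
        inj_on encS S1 \<and> inj_on encL L1 \<and>
        (\<forall>s0 xs. lts_path I1 \<delta>1 s0 xs \<longrightarrow>
            lts_path I2 \<delta>2 (encS s0) (map (\<lambda>(l, s). (encL l, encS s)) xs)) \<and>
        (\<forall>s0' ys. lts_path I2 \<delta>2 s0' ys \<longrightarrow>
            (\<exists>s0 xs. lts_path I1 \<delta>1 s0 xs \<and> encS s0 = s0' \<and>
                     map (\<lambda>(l, s). (encL l, encS s)) xs = ys)))"

section \<open>The action language BC\<close>

type_synonym ('f, 'o) bc_atom = "'f \<times> 'o"
text \<open>Dynamic law: (head (None = false), after-part (atoms or action constants), ifcons-part).\<close>
type_synonym ('f, 'o, 'a) dyn_law = "('f \<times> 'o) option \<times> (('f \<times> 'o) + 'a) set \<times> ('f \<times> 'o) set"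
text \<open>Static law: (head (None = false), if-part, ifcons-part).\<close>
type_synonym ('f, 'o) stat_law = "('f \<times> 'o) option \<times> ('f \<times> 'o) set \<times> ('f \<times> 'o) set"

record ('f, 'o, 'a) bc_desc =
  bfluents :: "'f set"
  bdom :: "'f \<Rightarrow> 'o set"
  bactions :: "'a set"
  bdyn :: "('f, 'o, 'a) dyn_law set"
  bstat :: "('f, 'o) stat_law set"
  binit :: "('f \<times> 'o) set"

datatype ('f, 'o, 'a) patom = FAt nat 'f 'o | AAt nat 'a
datatype 'x lit = Pos 'x | Neg 'x

text \<open>A rule (H, B+, B~): disjunction of H <- conjunction of B+, default negation of each element of B~.\<close>
type_synonym 'x rule = "'x lit set \<times> 'x lit set \<times> 'x lit set"

definition consistent :: "'x lit set \<Rightarrow> bool" where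
  "consistent X \<longleftrightarrow> \<not> (\<exists>a. Pos a \<in> X \<and> Neg a \<in> X)"

definition reduct :: "'x rule set \<Rightarrow> 'x lit set \<Rightarrow> ('x lit set \<times> 'x lit set) set" where
  "reduct \<Pi> X = {(h, b). \<exists>n. (h, b, n) \<in> \<Pi> \<and> n \<inter> X = {}}"

definition closed_under :: "('x lit set \<times> 'x lit set) set \<Rightarrow> 'x lit set \<Rightarrow> bool" where
  "closed_under R Y \<longleftrightarrow> (\<forall>(h, b) \<in> R. b \<subseteq> Y \<longrightarrow> h \<inter> Y \<noteq> {})"

text \<open>(Consistent) answer sets in the sense of Gelfond and Lifschitz.\<close>
definition stable_model :: "'x rule set \<Rightarrow> 'x lit set \<Rightarrow> bool" where
  "stable_model \<Pi> X \<longleftrightarrow> consistent X \<and> closed_under (reduct \<Pi> X) X \<and>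
     (\<forall>Y. Y \<subset> X \<longrightarrow> \<not> closed_under (reduct \<Pi> X) Y)"

fun head_lits :: "nat \<Rightarrow> ('f \<times> 'o) option \<Rightarrow> ('f, 'o, 'a) patom lit set" where
  "head_lits i None = {}"
| "head_lits i (Some (f, w0)) = {Pos (FAt i f w0)}"

fun after_lit :: "nat \<Rightarrow> (('f \<times> 'o) + 'a) \<Rightarrow> ('f, 'o, 'a) patom lit" where
  "after_lit i (Inl (f, w0)) = Pos (FAt i f w0)"
| "after_lit i (Inr a) = Pos (AAt i a)"

definition pos_at :: "nat \<Rightarrow> ('f \<times> 'o) set \<Rightarrow> ('f, 'o, 'a) patom lit set" where
  "pos_at i A = (\<lambda>(f, w0). Pos (FAt i f w0)) ` A"

definition neg_at :: "nat \<Rightarrow> ('f \<times> 'o) set \<Rightarrow> ('f, 'o, 'a) patom lit set" where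
  "neg_at i A = (\<lambda>(f, w0). Neg (FAt i f w0)) ` A"

definition bc_prog :: "('f, 'o, 'a) bc_desc \<Rightarrow> nat \<Rightarrow> ('f, 'o, 'a) patom rule set" where
  "bc_prog B l =
     {(head_lits i h, pos_at i A, neg_at i C) | h A C i. (h, A, C) \<in> bstat B \<and> i \<le> l}
   \<union> {(head_lits (Suc i) h, after_lit i ` A, neg_at (Suc i) C) | h A C i.
        (h, A, C) \<in> bdyn B \<and> i < l}
   \<union> {({Pos (FAt 0 f w0)}, {}, {}) | f w0. (f, w0) \<in> binit B}
   \<union> {({Pos (FAt 0 f w0), Neg (FAt 0 f w0)}, {}, {}) | f w0. f \<in> bfluents B \<and> w0 \<in> bdom B f}
   \<union> {({Pos (AAt i a), Neg (AAt i a)}, {}, {}) | a i. a \<in> bactions B \<and> i < l}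
   \<union> {({}, {}, {Pos (FAt i f w0) | w0. w0 \<in> bdom B f}) | f i. f \<in> bfluents B \<and> i \<le> l}
   \<union> {({Neg (FAt i f w0)}, {Pos (FAt i f w)}, {}) | f w0 w i.
        f \<in> bfluents B \<and> w0 \<in> bdom B f \<and> w \<in> bdom B f \<and> w0 \<noteq> w \<and> i \<le> l}"

definition sigma :: "nat \<Rightarrow> ('f, 'o, 'a) patom lit set \<Rightarrow> ('f \<times> 'o) set" where
  "sigma i X = {(f, w0). Pos (FAt i f w0) \<in> X}"

definition ts_init :: "('f, 'o, 'a) bc_desc \<Rightarrow> ('f \<times> 'o) set set" where
  "ts_init B = {sigma 0 X | X. stable_model (bc_prog B 0) X}"

inductive_set ts_states :: "('f, 'o, 'a) bc_desc \<Rightarrow> ('f \<times> 'o) set set"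
  for B where
  ts_init_in: "stable_model (bc_prog B 0) X \<Longrightarrow> sigma 0 X \<in> ts_states B"
| ts_step: "stable_model (bc_prog B (Suc l)) X \<Longrightarrow> sigma l X \<in> ts_states B \<Longrightarrow>
            sigma (Suc l) X \<in> ts_states B"

definition ts_delta :: "('f, 'o, 'a) bc_desc \<Rightarrow> (('f \<times> 'o) set \<times> 'a set \<times> ('f \<times> 'o) set) set" where
  "ts_delta B = {(sigma l X, {a. Pos (AAt l a) \<in> X}, sigma (Suc l) X) | l X.
                   stable_model (bc_prog B (Suc l)) X \<and> sigma l X \<in> ts_states B}"

section \<open>The encoding bc(W)\<close>

datatype ('v, 'p) fluent = FlVar 'v | FlPlace 'p | FlTrans
datatype 'd fval = Val 'd | Null | BTrue | BFalse

datatype ('v, 'd) dnf_lit = DEq 'v 'd | DUndef 'v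

fun dnf_lit_guard :: "('v, 'd) dnf_lit \<Rightarrow> ('v, 'd) guard" where
  "dnf_lit_guard (DEq v w0) = GEq (GVar v) (GConst w0)"
| "dnf_lit_guard (DUndef v) = GNot (GDef v)"

fun dnf_lit_var :: "('v, 'd) dnf_lit \<Rightarrow> 'v" where
  "dnf_lit_var (DEq v w0) = v"
| "dnf_lit_var (DUndef v) = v"

fun dnf_lit_tr :: "('v, 'd) dnf_lit \<Rightarrow> (('v, 'p) fluent \<times> 'd fval)" where
  "dnf_lit_tr (DEq v w0) = (FlVar v, Val w0)"
| "dnf_lit_tr (DUndef v) = (FlVar v, Null)"

definition dnf_char :: "('v, 'd) data_model \<Rightarrow> ('v, 'd) guard \<Rightarrow> ('v, 'd) dnf_lit list list \<Rightarrow> bool" where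
  "dnf_char D g \<phi> \<longleftrightarrow>
     (\<forall>\<eta>. assignment D \<eta> \<longrightarrow>
        (holds D \<eta> g \<longleftrightarrow> (\<exists>c \<in> set \<phi>. \<forall>l \<in> set c. holds D \<eta> (dnf_lit_guard l))))"

definition bc_enc ::
  "('v, 'd, 'p, 't) dawnet \<Rightarrow> ('t \<Rightarrow> ('v, 'd) dnf_lit list list) \<Rightarrow>
   (('v, 'p) fluent, 'd fval, 't) bc_desc" where
  "bc_enc W dnf =
   \<lparr> bfluents = FlVar ` Vprime W \<union> FlPlace ` places W \<union> {FlTrans},
     bdom = (\<lambda>f. case f of FlVar v \<Rightarrow> Val ` adm W v \<union> {Null}
                          | FlPlace p \<Rightarrow> {BTrue, BFalse}
                          | FlTrans \<Rightarrow> {BTrue, BFalse}),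
     bactions = transs W,
     bdyn =
        {(Some (FlVar v, w0), {Inl (FlVar v, w0)}, {(FlVar v, w0)}) | v w0.
           v \<in> Vprime W \<and> w0 \<in> Val ` adm W v \<union> {Null}}
      \<union> {(Some (FlPlace p, w0), {Inl (FlPlace p, w0)}, {(FlPlace p, w0)}) | p w0.
           p \<in> places W \<and> w0 \<in> {BTrue, BFalse}}
      \<union> {(Some (FlPlace p, BFalse), {Inr t}, {}) | p t.
           t \<in> transs W \<and> p \<in> preset W t - postset W t}
      \<union> {(Some (FlPlace p, BTrue), {Inr t}, {}) | p t.
           t \<in> transs W \<and> p \<in> postset W t - preset W t}
      \<union> {(Some (FlVar v, Val d), {Inr t}, {(FlVar v, Val d)}) | v d t S.
           t \<in> transs W \<and> wr W t v = Some S \<and> d \<in> S}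
      \<union> {(Some (FlVar v, Null), {Inr t}, {}) | v t.
           t \<in> transs W \<and> wr W t v = Some {}}
      \<union> {(None, {Inr t}, {(FlVar v, w0)}) | v w0 t S.
           t \<in> transs W \<and> wr W t v = Some S \<and> S \<noteq> {} \<and>
           w0 \<in> {Null} \<union> Val ` (adm W v - S)}
      \<union> {(None, {Inr t, Inr s}, {}) | t s.
           t \<in> transs W \<and> s \<in> transs W \<and> t \<noteq> s}
      \<union> {(None, {Inr t, Inl (FlPlace p, BFalse)}, {}) | t p.
           t \<in> transs W \<and> p \<in> preset W t}
      \<union> {(Some (FlTrans, BTrue), {Inr t}, {}) | t. t \<in> transs W}
      \<union> {(None, {Inr t} \<union> Inl ` dnf_lit_tr ` set c, {}) | t c.
           t \<in> transs W \<and> \<not> guard_valid (dmodel W) (gd W t) \<and> c \<in> set (dnf t)},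
     bstat = {},
     binit = {(FlPlace (pstart W), BTrue)}
           \<union> {(FlPlace p, BFalse) | p. p \<in> places W \<and> p \<noteq> pstart W}
           \<union> {(FlVar v, Null) | v. v \<in> Vprime W}
           \<union> {(FlTrans, BTrue)} \<rparr>"

end

theory Submission
  imports Defs
begin

text \<open>A reachable state of the 1-safe net is encoded by the fluent atoms recording which places are
  marked and which value (or \<open>null\<close>) each variable has. In one direction, a firing sequence of
  length \<open>n\<close> yields an answer set of \<open>P\<^sub>n(bc(W))\<close>, its history: the encodings of all visited
  states, the fired transitions, and all complementary negative literals. It is minimal because
  every atom at step \<open>i + 1\<close> is derived either by an inertia law or by an effect law of the
  transition fired at step \<open>i\<close>. Conversely, if step \<open>l\<close> of an answer set of \<open>P\<^sub>l\<^sub>+\<^sub>1(bc(W))\<close>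
  encodes a reachable state, then exactly one action \<open>t\<close> occurs at step \<open>l\<close>, the constraints of
  \<open>bc(W)\<close> force \<open>t\<close> to be enabled with its guard true, and step \<open>l + 1\<close> encodes the state
  reached by firing \<open>t\<close>.\<close>

lemma closed_under_reductD:
  assumes "closed_under (reduct P X) Y" "(h, b, n) \<in> P" "n \<inter> X = {}" "b \<subseteq> Y"
  shows "h \<inter> Y \<noteq> {}"
proof -
  have "(h, b) \<in> reduct P X" using assms(2,3) unfolding reduct_def by auto
  then show ?thesis using assms(1,4) unfolding closed_under_def by auto
qed

lemma closed_under_reductI:
  assumes "\<And>h b n. (h, b, n) \<in> P \<Longrightarrow> n \<inter> X = {} \<Longrightarrow> b \<subseteq> Y \<Longrightarrow> h \<inter> Y \<noteq> {}"
  shows "closed_under (reduct P X) Y"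
  unfolding closed_under_def reduct_def using assms by auto

lemma stable_model_closed:
  "stable_model P X \<Longrightarrow> (h, b, n) \<in> P \<Longrightarrow> n \<inter> X = {} \<Longrightarrow> b \<subseteq> X \<Longrightarrow> h \<inter> X \<noteq> {}"
  unfolding stable_model_def by (elim conjE closed_under_reductD)

lemma stable_model_consistent: "stable_model P X \<Longrightarrow> Pos a \<in> X \<Longrightarrow> Neg a \<notin> X"
  unfolding stable_model_def consistent_def by blast

text \<open>Otherwise removing the atom would leave a set closed under the reduct, against minimality.\<close>

lemma stable_model_supported:
  assumes "stable_model P X" "a \<in> X"
  obtains h b n where "(h, b, n) \<in> P" "n \<inter> X = {}" "b \<subseteq> X" "a \<in> h"
proof (rule ccontr)
  assume unsupported: "\<not> thesis"
  have "closed_under (reduct P X) (X - {a})"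
  proof (rule closed_under_reductI)
    fix h b n assume r: "(h, b, n) \<in> P" "n \<inter> X = {}" "b \<subseteq> X - {a}"
    then have "h \<inter> X \<noteq> {}" using stable_model_closed[OF assms(1)] by blast
    then show "h \<inter> (X - {a}) \<noteq> {}" using unsupported that r by blast
  qed
  moreover have "X - {a} \<subset> X" using assms(2) by auto
  ultimately show False using assms(1) unfolding stable_model_def by auto
qed

lemma stable_modelI:
  assumes "consistent X" "closed_under (reduct P X) X"
    and "\<And>Y. Y \<subseteq> X \<Longrightarrow> closed_under (reduct P X) Y \<Longrightarrow> X \<subseteq> Y"
  shows "stable_model P X"
  unfolding stable_model_def using assms by blast

lemma bc_prog_dynI:
  "(h, A, C) \<in> bdyn B \<Longrightarrow> i < l \<Longrightarrow>
   (head_lits (Suc i) h, after_lit i ` A, neg_at (Suc i) C) \<in> bc_prog B l"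
  unfolding bc_prog_def by (intro UnI1 UnI2) auto

lemma bc_prog_initI: "(f, w) \<in> binit B \<Longrightarrow> ({Pos (FAt 0 f w)}, {}, {}) \<in> bc_prog B l"
  unfolding bc_prog_def by (intro UnI1 UnI2) auto

lemma bc_prog_action_choiceI:
  "a \<in> bactions B \<Longrightarrow> i < l \<Longrightarrow> ({Pos (AAt i a), Neg (AAt i a)}, {}, {}) \<in> bc_prog B l"
  unfolding bc_prog_def by (intro UnI1 UnI2) auto

lemma bc_prog_value_existsI:
  "f \<in> bfluents B \<Longrightarrow> i \<le> l \<Longrightarrow>
   ({}, {}, {Pos (FAt i f w) | w. w \<in> bdom B f}) \<in> bc_prog B l"
  unfolding bc_prog_def by (intro UnI1 UnI2) auto

lemma bc_prog_value_uniqueI: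
  "f \<in> bfluents B \<Longrightarrow> w \<in> bdom B f \<Longrightarrow> w' \<in> bdom B f \<Longrightarrow> w \<noteq> w' \<Longrightarrow> i \<le> l \<Longrightarrow>
   ({Neg (FAt i f w')}, {Pos (FAt i f w)}, {}) \<in> bc_prog B l"
  unfolding bc_prog_def by (intro UnI1 UnI2) auto

lemma bc_prog_cases:
  assumes "r \<in> bc_prog B l"
  obtains (static) h A C i where "(h, A, C) \<in> bstat B" "i \<le> l"
      "r = (head_lits i h, pos_at i A, neg_at i C)"
  | (dynamic) h A C i where "(h, A, C) \<in> bdyn B" "i < l"
      "r = (head_lits (Suc i) h, after_lit i ` A, neg_at (Suc i) C)"
  | (init) f w where "(f, w) \<in> binit B" "r = ({Pos (FAt 0 f w)}, {}, {})"
  | (fluent_choice) f w where "f \<in> bfluents B" "w \<in> bdom B f"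
      "r = ({Pos (FAt 0 f w), Neg (FAt 0 f w)}, {}, {})"
  | (action_choice) a i where "a \<in> bactions B" "i < l"
      "r = ({Pos (AAt i a), Neg (AAt i a)}, {}, {})"
  | (value_exists) f i where "f \<in> bfluents B" "i \<le> l"
      "r = ({}, {}, {Pos (FAt i f w) | w. w \<in> bdom B f})"
  | (value_unique) f w' w i where "f \<in> bfluents B" "w' \<in> bdom B f" "w \<in> bdom B f" "w' \<noteq> w"
      "i \<le> l" "r = ({Neg (FAt i f w')}, {Pos (FAt i f w)}, {})"
  using assms unfolding bc_prog_def
  by (elim UnE CollectE exE conjE) (rule that; assumption)+

lemma bc_prog_action_head:
  assumes "(h, b, n) \<in> bc_prog B l" "Pos (AAt i a) \<in> h"
  shows "a \<in> bactions B \<and> i < l"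
  using assms(1)
proof (cases rule: bc_prog_cases)
  case (static h A C i)
  then show ?thesis using assms(2) by (cases h) auto
next
  case (dynamic h A C i)
  then show ?thesis using assms(2) by (cases h) auto
qed (use assms(2) in auto)

lemma bc_stable_value_exists:
  assumes "stable_model (bc_prog B l) X" "f \<in> bfluents B" "i \<le> l"
  obtains w where "w \<in> bdom B f" "Pos (FAt i f w) \<in> X"
  using stable_model_closed[OF assms(1) bc_prog_value_existsI[OF assms(2,3)]] that by blast

lemma bc_stable_value_unique:
  assumes "stable_model (bc_prog B l) X" "f \<in> bfluents B" "i \<le> l"
    and "w \<in> bdom B f" "w' \<in> bdom B f" "Pos (FAt i f w) \<in> X" "Pos (FAt i f w') \<in> X"
  shows "w = w'"
proof (rule ccontr)
  assume "w \<noteq> w'"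
  then have "({Neg (FAt i f w')}, {Pos (FAt i f w)}, {}) \<in> bc_prog B l"
    using assms(2-5) by (intro bc_prog_value_uniqueI)
  then have "Neg (FAt i f w') \<in> X"
    using stable_model_closed[OF assms(1)] assms(6) by fastforce
  then show False using stable_model_consistent[OF assms(1,7)] by blast
qed

lemma after_lit_Inl_subset_iff: "after_lit i ` Inl ` A \<subseteq> X \<longleftrightarrow> A \<subseteq> sigma i X"
proof -
  have "after_lit i (Inl x) = Pos (FAt i (fst x) (snd x))" for x by (cases x) simp
  then show ?thesis by (auto simp: sigma_def image_subset_iff)
qed

lemma bc_stable_dyn_law:
  assumes "stable_model (bc_prog B l) X" "(h, A, C) \<in> bdyn B" "i < l"
    and "after_lit i ` A \<subseteq> X" "neg_at (Suc i) C \<inter> X = {}"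
  shows "head_lits (Suc i) h \<inter> X \<noteq> {}"
  using stable_model_closed[OF assms(1) bc_prog_dynI[OF assms(2,3)] assms(5,4)] .

definition next_marking :: "('v, 'd, 'p, 't) dawnet \<Rightarrow> 't \<Rightarrow> ('p \<Rightarrow> nat) \<Rightarrow> 'p \<Rightarrow> nat" where
  "next_marking W t M p =
     (if p \<in> preset W t - postset W t then M p - 1
      else if p \<in> postset W t - preset W t then M p + 1 else M p)"

lemma assignment_update_iff:
  "(dom \<eta>' = (dom \<eta> \<union> {v. \<exists>S. U v = Some S \<and> S \<noteq> {}}) - {v. U v = Some {}} \<and>
    (\<forall>v \<in> dom \<eta>'. (v \<in> dom U \<longrightarrow> the (\<eta>' v) \<in> the (U v)) \<and> (v \<notin> dom U \<longrightarrow> \<eta>' v = \<eta> v))) \<longleftrightarrow>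
   (\<forall>v. U v = None \<longrightarrow> \<eta>' v = \<eta> v) \<and> (\<forall>v. U v = Some {} \<longrightarrow> \<eta>' v = None) \<and>
   (\<forall>v S. U v = Some S \<longrightarrow> S \<noteq> {} \<longrightarrow> (\<exists>d \<in> S. \<eta>' v = Some d))"
  (is "?dom \<and> ?val \<longleftrightarrow> ?keep \<and> ?clear \<and> ?write")
proof (intro iffI conjI allI impI)
  fix v assume upd: "?dom \<and> ?val" and keep: "U v = None"
  show "\<eta>' v = \<eta> v"
  proof (cases "v \<in> dom \<eta>'")
    case False
    then have "v \<notin> dom \<eta>" using upd keep by auto
    then show ?thesis using False by (simp add: domIff)
  next
    case True
    moreover have "v \<notin> dom U" using keep by auto
    ultimately show ?thesis using upd by blast
  qed
next
  fix v assume "?dom \<and> ?val" "U v = Some {}"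
  then show "\<eta>' v = None" by auto
next
  fix v S assume upd: "?dom \<and> ?val" and written: "U v = Some S" "S \<noteq> {}"
  then have "v \<in> dom \<eta>'" by auto
  then obtain d where d: "\<eta>' v = Some d" by blast
  have "v \<in> dom U" using written by auto
  then have "the (\<eta>' v) \<in> the (U v)" using upd \<open>v \<in> dom \<eta>'\<close> by blast
  then show "\<exists>d \<in> S. \<eta>' v = Some d" using d written by auto
next
  assume upd: "?keep \<and> ?clear \<and> ?write"
  show ?dom
  proof (rule set_eqI)
    fix v
    show "v \<in> dom \<eta>' \<longleftrightarrow> v \<in> (dom \<eta> \<union> {v. \<exists>S. U v = Some S \<and> S \<noteq> {}}) - {v. U v = Some {}}"
      using upd by (cases "U v") fastforce+
  qed
  show ?val
  proof
    fix v assume "v \<in> dom \<eta>'"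
    then show "(v \<in> dom U \<longrightarrow> the (\<eta>' v) \<in> the (U v)) \<and> (v \<notin> dom U \<longrightarrow> \<eta>' v = \<eta> v)"
      using upd by (cases "U v") force+
  qed
qed

lemma valid_firing_iff:
  "valid_firing W (M, \<eta>) t (M', \<eta>') \<longleftrightarrow>
     t \<in> transs W \<and> preset W t \<subseteq> {p. 0 < M p} \<and> holds (dmodel W) \<eta> (gd W t) \<and>
     M' = next_marking W t M \<and>
     (\<forall>v. wr W t v = None \<longrightarrow> \<eta>' v = \<eta> v) \<and>
     (\<forall>v. wr W t v = Some {} \<longrightarrow> \<eta>' v = None) \<and>
     (\<forall>v S. wr W t v = Some S \<longrightarrow> S \<noteq> {} \<longrightarrow> (\<exists>d \<in> S. \<eta>' v = Some d))"
  unfolding valid_firing_def next_marking_def assignment_update_iff[symmetric]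
  by (auto simp: fun_eq_iff)

lemma wr_in_Vprime: "t \<in> transs W \<Longrightarrow> wr W t v = Some S \<Longrightarrow> v \<in> Vprime W"
  by (auto simp: Vprime_def)

lemma wr_subset_adm: "t \<in> transs W \<Longrightarrow> wr W t v = Some S \<Longrightarrow> S \<subseteq> adm W v"
  by (force simp: adm_def)

fun fluent_val :: "('v, 'd, 'p) dstate \<Rightarrow> ('v, 'p) fluent \<Rightarrow> 'd fval" where
  "fluent_val (M, \<eta>) (FlVar v) = (case \<eta> v of None \<Rightarrow> Null | Some d \<Rightarrow> Val d)"
| "fluent_val (M, \<eta>) (FlPlace p) = (if 0 < M p then BTrue else BFalse)"
| "fluent_val (M, \<eta>) FlTrans = BTrue"

text \<open>\<open>FlTrans\<close> has no inertia law, so its value at step \<open>i + 1\<close> of an answer set must be caused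
  by an action at step \<open>i\<close>: this forces exactly one transition per step.\<close>

fun effect :: "('v, 'd, 'p, 't) dawnet \<Rightarrow> 't \<Rightarrow> ('v, 'p) fluent \<Rightarrow> 'd fval \<Rightarrow> bool" where
  "effect W t (FlPlace p) w \<longleftrightarrow>
     p \<in> preset W t - postset W t \<and> w = BFalse \<or> p \<in> postset W t - preset W t \<and> w = BTrue"
| "effect W t (FlVar v) w \<longleftrightarrow> (\<exists>S. wr W t v = Some S \<and> (w \<in> Val ` S \<or> S = {} \<and> w = Null))"
| "effect W t FlTrans w \<longleftrightarrow> w = BTrue"

fun inertial :: "('v, 'd, 'p, 't) dawnet \<Rightarrow> 't \<Rightarrow> ('v, 'p) fluent \<Rightarrow> bool" where
  "inertial W t (FlPlace p) \<longleftrightarrow> p \<notin> preset W t - postset W t \<and> p \<notin> postset W t - preset W t"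
| "inertial W t (FlVar v) \<longleftrightarrow> wr W t v = None"
| "inertial W t FlTrans \<longleftrightarrow> False"

lemma not_inertial_iff_effect: "\<not> inertial W t f \<longleftrightarrow> (\<exists>w. effect W t f w)"
proof (cases f)
  case (FlVar v)
  show ?thesis
  proof (cases "wr W t v")
    case (Some S)
    show ?thesis
    proof (cases "S = {}")
      case False
      then obtain d where "d \<in> S" by blast
      then have "effect W t f (Val d)" using FlVar Some by auto
      then show ?thesis using FlVar Some by auto
    qed (use FlVar Some in auto)
  qed (simp add: FlVar)
qed auto

lemma effect_determined:
  "effect W t f w \<Longrightarrow> effect W t f w' \<Longrightarrow> w \<notin> range Val \<Longrightarrow> w' = w"
  by (cases f) auto

lemma fluent_val_inertial:
  assumes "valid_firing W s t s'" "inertial W t f"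
  shows "fluent_val s' f = fluent_val s f"
proof -
  obtain M \<eta> M' \<eta>' where s: "s = (M, \<eta>)" "s' = (M', \<eta>')" by fastforce
  note firing = assms(1)[unfolded s valid_firing_iff]
  have M': "M' = next_marking W t M" using firing by blast
  show ?thesis
  proof (cases f)
    case (FlVar v)
    then show ?thesis using firing assms(2) s by simp
  qed (use assms(2) in \<open>auto simp: s M' next_marking_def\<close>)
qed

lemma fluent_val_effect:
  assumes "valid_firing W s t s'" "\<forall>p. fst s p \<le> 1" "\<not> inertial W t f"
  shows "effect W t f (fluent_val s' f)"
proof -
  obtain M \<eta> M' \<eta>' where s: "s = (M, \<eta>)" "s' = (M', \<eta>')" by fastforce
  note firing = assms(1)[unfolded s valid_firing_iff]
  show ?thesis
  proof (cases f)
    case (FlVar v)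
    then obtain S where S: "wr W t v = Some S" using assms(3) by auto
    show ?thesis
    proof (cases "S = {}")
      case True
      then have "\<eta>' v = None" using firing S by blast
      then show ?thesis using FlVar S s True by simp
    next
      case False
      then obtain d where "d \<in> S" "\<eta>' v = Some d" using firing S by blast
      then show ?thesis using FlVar S s by auto
    qed
  next
    case (FlPlace p)
    have "M p = 1" if "p \<in> preset W t"
    proof -
      have "0 < M p" using that firing by blast
      moreover have "M p \<le> 1" using assms(2) s by simp
      ultimately show "M p = 1" by simp
    qed
    moreover have "M' = next_marking W t M" using firing by blast
    ultimately show ?thesis using FlPlace assms(3) by (auto simp: s next_marking_def)
  qed (simp add: s)
qed

lemma fluent_val_FlVar_eq_iff:
  "fluent_val (M, \<eta>) (FlVar v) = fluent_val (M', \<eta>') (FlVar v) \<longleftrightarrow> \<eta> v = \<eta>' v"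
  by (auto split: option.splits)

definition enc_fluents :: "('v, 'd, 'p, 't) dawnet \<Rightarrow> ('v, 'p) fluent set" where
  "enc_fluents W = FlVar ` Vprime W \<union> FlPlace ` places W \<union> {FlTrans}"

lemma enc_fluents_simps [simp]:
  "FlTrans \<in> enc_fluents W"
  "FlVar v \<in> enc_fluents W \<longleftrightarrow> v \<in> Vprime W"
  "FlPlace p \<in> enc_fluents W \<longleftrightarrow> p \<in> places W"
  by (auto simp: enc_fluents_def)

definition enc_state ::
  "('v, 'd, 'p, 't) dawnet \<Rightarrow> ('v, 'd, 'p) dstate \<Rightarrow> (('v, 'p) fluent \<times> 'd fval) set" where
  "enc_state W s = {(f, fluent_val s f) | f. f \<in> enc_fluents W}"

lemma mem_enc_state [simp]: "(f, w) \<in> enc_state W s \<longleftrightarrow> f \<in> enc_fluents W \<and> w = fluent_val s f"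
  by (auto simp: enc_state_def)

lemma sigma_enc_state_iff:
  assumes "sigma i X = enc_state W s"
  shows "Pos (FAt i f w) \<in> X \<longleftrightarrow> f \<in> enc_fluents W \<and> w = fluent_val s f"
proof -
  have "Pos (FAt i f w) \<in> X \<longleftrightarrow> (f, w) \<in> sigma i X" by (simp add: sigma_def)
  then show ?thesis using assms by simp
qed

lemma holds_dnf_lit_iff:
  assumes "dnf_lit_var lt \<in> Vprime W"
  shows "holds D \<eta> (dnf_lit_guard lt) \<longleftrightarrow> dnf_lit_tr lt \<in> enc_state W (M, \<eta>)"
proof (cases lt)
  case (DEq v d)
  then show ?thesis using assms by (cases "\<eta> v") auto
next
  case (DUndef v)
  then show ?thesis using assms by (cases "\<eta> v") auto
qed

definition typed_state :: "('v, 'd, 'p, 't) dawnet \<Rightarrow> ('v, 'd, 'p) dstate \<Rightarrow> bool" where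
  "typed_state W s \<longleftrightarrow> (\<forall>p. p \<notin> places W \<longrightarrow> fst s p = 0) \<and>
     (\<forall>v. v \<notin> Vprime W \<longrightarrow> snd s v = None) \<and>
     (\<forall>v d. snd s v = Some d \<longrightarrow> d \<in> adm W v \<and> d \<in> ddm (dmodel W) v)"

lemma typed_state_eqI:
  assumes "typed_state W s" "typed_state W s'" "\<forall>p. fst s p \<le> 1" "\<forall>p. fst s' p \<le> 1"
    and "\<And>f. f \<in> enc_fluents W \<Longrightarrow> fluent_val s f = fluent_val s' f"
  shows "s = s'"
proof -
  obtain M \<eta> M' \<eta>' where s: "s = (M, \<eta>)" "s' = (M', \<eta>')" by fastforce
  have "M p = M' p" for p
  proof (cases "p \<in> places W")
    case True
    then have "(0 < M p) = (0 < M' p)"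
      using assms(5)[of "FlPlace p"] by (auto simp: s split: if_splits)
    moreover have "M p \<le> 1" "M' p \<le> 1" using assms(3,4) s by auto
    ultimately show ?thesis by (cases "M p = 0"; cases "M' p = 0") auto
  qed (use assms(1,2) in \<open>auto simp: s typed_state_def\<close>)
  moreover have "\<eta> v = \<eta>' v" for v
    using assms(1,2) assms(5)[of "FlVar v"]
    by (cases "v \<in> Vprime W") (auto simp: s typed_state_def split: option.splits)
  ultimately show ?thesis using s by auto
qed

lemma bc_enc_simps [simp]:
  "bfluents (bc_enc W dnf) = enc_fluents W"
  "bactions (bc_enc W dnf) = transs W"
  "bstat (bc_enc W dnf) = {}"
  "bdom (bc_enc W dnf) (FlVar v) = Val ` adm W v \<union> {Null}"
  "bdom (bc_enc W dnf) (FlPlace p) = {BTrue, BFalse}"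
  "bdom (bc_enc W dnf) FlTrans = {BTrue, BFalse}"
  by (auto simp: bc_enc_def enc_fluents_def)

lemma bc_enc_init_iff:
  assumes "pstart W \<in> places W"
  shows "(f, w) \<in> binit (bc_enc W dnf) \<longleftrightarrow> f \<in> enc_fluents W \<and> w = fluent_val (rg_init W) f"
  using assms by (cases f) (auto simp: bc_enc_def rg_init_def init_marking_def)

lemma bc_enc_inertia_law:
  "f \<in> enc_fluents W \<Longrightarrow> f \<noteq> FlTrans \<Longrightarrow> w \<in> bdom (bc_enc W dnf) f \<Longrightarrow>
   (Some (f, w), {Inl (f, w)}, {(f, w)}) \<in> bdyn (bc_enc W dnf)"
  by (cases f) (auto simp: bc_enc_def)

text \<open>Effects with a data value are the nondeterministic writes \<open>v = d after t ifcons v = d\<close>.\<close>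

lemma bc_enc_effect_law:
  assumes "t \<in> transs W" "effect W t f w"
  shows "(Some (f, w), {Inr t}, if w \<in> range Val then {(f, w)} else {}) \<in> bdyn (bc_enc W dnf)"
  using assms by (cases f) (auto simp: bc_enc_def)

lemma bc_enc_write_constraint:
  "t \<in> transs W \<Longrightarrow> wr W t v = Some S \<Longrightarrow> S \<noteq> {} \<Longrightarrow> w \<in> {Null} \<union> Val ` (adm W v - S) \<Longrightarrow>
   (None, {Inr t}, {(FlVar v, w)}) \<in> bdyn (bc_enc W dnf)"
  unfolding bc_enc_def by auto

lemma bc_enc_concurrency_constraint:
  "t \<in> transs W \<Longrightarrow> t' \<in> transs W \<Longrightarrow> t \<noteq> t' \<Longrightarrow>
   (None, {Inr t, Inr t'}, {}) \<in> bdyn (bc_enc W dnf)"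
  unfolding bc_enc_def by auto

lemma bc_enc_enabling_constraint:
  "t \<in> transs W \<Longrightarrow> p \<in> preset W t \<Longrightarrow>
   (None, {Inr t, Inl (FlPlace p, BFalse)}, {}) \<in> bdyn (bc_enc W dnf)"
  unfolding bc_enc_def by auto

lemma bc_enc_guard_constraint:
  "t \<in> transs W \<Longrightarrow> \<not> guard_valid (dmodel W) (gd W t) \<Longrightarrow> c \<in> set (dnf t) \<Longrightarrow>
   (None, {Inr t} \<union> Inl ` dnf_lit_tr ` set c, {}) \<in> bdyn (bc_enc W dnf)"
  unfolding bc_enc_def bc_desc.select_convs by (intro UnI2) blast

lemma bc_enc_dyn_cases:
  assumes "(h, A, C) \<in> bdyn (bc_enc W dnf)"
  obtains (inertia) f w where "f \<in> enc_fluents W" "f \<noteq> FlTrans" "w \<in> bdom (bc_enc W dnf) f"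
      "h = Some (f, w)" "A = {Inl (f, w)}" "C = {(f, w)}"
  | (effect) t f w where "t \<in> transs W" "effect W t f w"
      "h = Some (f, w)" "A = {Inr t}" "C = (if w \<in> range Val then {(f, w)} else {})"
  | (write_constraint) t v S w where "t \<in> transs W" "wr W t v = Some S" "S \<noteq> {}"
      "w \<in> {Null} \<union> Val ` (adm W v - S)" "h = None" "A = {Inr t}" "C = {(FlVar v, w)}"
  | (concurrency_constraint) t t' where "t \<in> transs W" "t' \<in> transs W" "t \<noteq> t'"
      "h = None" "A = {Inr t, Inr t'}" "C = {}"
  | (enabling_constraint) t p where "t \<in> transs W" "p \<in> preset W t"
      "h = None" "A = {Inr t, Inl (FlPlace p, BFalse)}" "C = {}"
  | (guard_constraint) t c where "t \<in> transs W" "\<not> guard_valid (dmodel W) (gd W t)"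
      "c \<in> set (dnf t)" "h = None" "A = {Inr t} \<union> Inl ` dnf_lit_tr ` set c" "C = {}"
  using assms unfolding bc_enc_def bc_desc.select_convs
  apply (elim UnE CollectE exE conjE Pair_inject)
  subgoal by (rule inertia) auto
  subgoal by (rule inertia) auto
  subgoal by (rule inertia) auto
  subgoal by (rule effect) auto
  subgoal by (rule effect) auto
  subgoal by (rule effect) auto
  subgoal by (rule effect) auto
  subgoal by (rule write_constraint) auto
  subgoal by (rule write_constraint) auto
  subgoal by (rule concurrency_constraint)
  subgoal by (rule enabling_constraint)
  subgoal by (rule effect) auto
  subgoal by (rule guard_constraint)
  done

locale dawnet_encoding =
  fixes W :: "('v, 'd, 'p, 't) dawnet"
    and dnf :: "'t \<Rightarrow> ('v, 'd) dnf_lit list list"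
  assumes wf: "wf_dawnet W"
    and safe: "one_safe W"
    and dnf_characterisation: "\<forall>t \<in> transs W. \<not> guard_valid (dmodel W) (gd W t) \<longrightarrow>
            dnf_char (dmodel W) (GNot (gd W t)) (dnf t) \<and>
            (\<forall>c \<in> set (dnf t). \<forall>l \<in> set c. dnf_lit_var l \<in> Vprime W)"
begin

abbreviation bcW :: "(('v, 'p) fluent, 'd fval, 't) bc_desc" where
  "bcW \<equiv> bc_enc W dnf"

lemma preset_subset_places: "preset W t \<subseteq> places W"
  using wf by (auto simp: wf_dawnet_def preset_def)

lemma postset_subset_places: "postset W t \<subseteq> places W"
  using wf by (auto simp: wf_dawnet_def postset_def)

lemma pstart_in_places: "pstart W \<in> places W"
  using wf by (simp add: wf_dawnet_def)

lemma Vprime_subset_dvars: "Vprime W \<subseteq> dvars (dmodel W)"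
  using wf unfolding wf_dawnet_def Vprime_def by blast

lemma typed_state_rg_init: "typed_state W (rg_init W)"
  using pstart_in_places by (simp add: typed_state_def rg_init_def init_marking_def)

lemma typed_state_valid_firing:
  assumes "typed_state W s" "valid_firing W s t s'"
  shows "typed_state W s'"
proof -
  obtain M \<eta> M' \<eta>' where s: "s = (M, \<eta>)" "s' = (M', \<eta>')" by fastforce
  note firing = assms(2)[unfolded s valid_firing_iff]
  have t: "t \<in> transs W" using firing by blast
  have "M' p = 0" if "p \<notin> places W" for p
  proof -
    have "p \<notin> preset W t" "p \<notin> postset W t"
      using that preset_subset_places postset_subset_places by auto
    then show ?thesis using firing assms(1) that by (simp add: s typed_state_def next_marking_def)
  qed
  moreover have "\<eta>' v = None" if "v \<notin> Vprime W" for v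
  proof -
    have "wr W t v = None" using that wr_in_Vprime[OF t] by (cases "wr W t v") auto
    then show ?thesis using firing that assms(1) by (simp add: s typed_state_def)
  qed
  moreover have "d \<in> adm W v \<and> d \<in> ddm (dmodel W) v" if "\<eta>' v = Some d" for v d
  proof (cases "wr W t v")
    case None
    then show ?thesis using firing that assms(1) by (simp add: s typed_state_def)
  next
    case (Some S)
    have "d \<in> S"
    proof (cases "S = {}")
      case False
      then obtain d' where "d' \<in> S" "\<eta>' v = Some d'" using firing Some by blast
      then show ?thesis using that by simp
    qed (use firing Some that in simp)
    moreover have "S \<subseteq> ddm (dmodel W) v" using wf t Some unfolding wf_dawnet_def by blast
    ultimately show ?thesis using wr_subset_adm[OF t Some] by blast
  qed
  ultimately show ?thesis by (simp add: s typed_state_def)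
qed

lemma rg_states_typed: "s \<in> rg_states W \<Longrightarrow> typed_state W s"
  by (induction rule: rg_states.induct) (auto intro: typed_state_rg_init typed_state_valid_firing)

lemma rg_states_safe:
  assumes "s \<in> rg_states W"
  shows "fst s p \<le> 1"
proof (cases "p \<in> places W")
  case True
  then show ?thesis using safe assms unfolding one_safe_def by blast
next
  case False
  then show ?thesis using rg_states_typed[OF assms] unfolding typed_state_def by fastforce
qed

lemma enc_state_inj_on: "inj_on (enc_state W) (rg_states W)"
proof (rule inj_onI)
  fix s s' assume "s \<in> rg_states W" "s' \<in> rg_states W" "enc_state W s = enc_state W s'"
  then show "s = s'"
    by (intro typed_state_eqI[of W] rg_states_typed rg_states_safe allI) (auto simp: set_eq_iff)
qed

lemma typed_state_assignment: "typed_state W (M, \<eta>) \<Longrightarrow> assignment (dmodel W) \<eta>"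
  using Vprime_subset_dvars unfolding typed_state_def assignment_def by fastforce

lemma fluent_val_in_bdom:
  assumes "typed_state W s" "f \<in> enc_fluents W"
  shows "fluent_val s f \<in> bdom bcW f"
proof -
  obtain M \<eta> where s: "s = (M, \<eta>)" by fastforce
  show ?thesis
  proof (cases f)
    case (FlVar v)
    then show ?thesis using assms by (cases "\<eta> v") (auto simp: s typed_state_def)
  qed (simp_all add: s)
qed

lemma effect_in_bdom:
  assumes "t \<in> transs W" "effect W t f w"
  shows "f \<in> enc_fluents W \<and> w \<in> bdom bcW f"
proof (cases f)
  case (FlPlace p)
  then show ?thesis using assms preset_subset_places postset_subset_places by auto
next
  case (FlVar v)
  then obtain S where S: "wr W t v = Some S" "w \<in> Val ` S \<or> S = {} \<and> w = Null"
    using assms(2) by auto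
  then have "Val ` S \<subseteq> Val ` adm W v" using wr_subset_adm[OF assms(1)] by blast
  then show ?thesis using FlVar S wr_in_Vprime[OF assms(1)] by auto
qed (use assms in simp)

lemma guard_fails_iff_clause:
  assumes "t \<in> transs W" "\<not> guard_valid (dmodel W) (gd W t)" "typed_state W (M, \<eta>)"
  shows "\<not> holds (dmodel W) \<eta> (gd W t) \<longleftrightarrow>
    (\<exists>c \<in> set (dnf t). dnf_lit_tr ` set c \<subseteq> enc_state W (M, \<eta>))"
proof -
  have "dnf_char (dmodel W) (GNot (gd W t)) (dnf t)"
    and vars: "\<forall>c \<in> set (dnf t). \<forall>lt \<in> set c. dnf_lit_var lt \<in> Vprime W"
    using dnf_characterisation assms(1,2) by auto
  then have "\<not> holds (dmodel W) \<eta> (gd W t) \<longleftrightarrow>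
      (\<exists>c \<in> set (dnf t). \<forall>lt \<in> set c. holds (dmodel W) \<eta> (dnf_lit_guard lt))"
    using typed_state_assignment[OF assms(3)] unfolding dnf_char_def by simp
  also have "\<dots> \<longleftrightarrow> (\<exists>c \<in> set (dnf t). dnf_lit_tr ` set c \<subseteq> enc_state W (M, \<eta>))"
    unfolding image_subset_iff
  proof (intro bex_cong ball_cong refl)
    fix c lt assume "c \<in> set (dnf t)" "lt \<in> set c"
    then show "holds (dmodel W) \<eta> (dnf_lit_guard lt) \<longleftrightarrow> dnf_lit_tr lt \<in> enc_state W (M, \<eta>)"
      using vars by (intro holds_dnf_lit_iff) blast
  qed
  finally show ?thesis .
qed

lemma bc_enc_head_typed:
  assumes "(h, b, n) \<in> bc_prog bcW l" "Pos (FAt i f w) \<in> h"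
  shows "i \<le> l \<and> f \<in> enc_fluents W \<and> w \<in> bdom bcW f"
  using assms(1)
proof (cases rule: bc_prog_cases)
  case (dynamic h' A C j)
  from dynamic(1) show ?thesis
  proof (cases rule: bc_enc_dyn_cases)
    case (effect t f' w')
    then show ?thesis using dynamic assms(2) effect_in_bdom by auto
  qed (use dynamic assms(2) in auto)
next
  case (init f' w')
  then show ?thesis
    using assms(2) bc_enc_init_iff[OF pstart_in_places] fluent_val_in_bdom typed_state_rg_init
    by auto
qed (use assms(2) in auto)

lemma bc_enc_successor_head:
  assumes "(h, b, n) \<in> bc_prog bcW l" "Pos (FAt (Suc i) f w) \<in> h"
  shows "f \<noteq> FlTrans \<and> b = {Pos (FAt i f w)} \<or> (\<exists>t. b = {Pos (AAt i t)} \<and> effect W t f w)"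
  using assms(1)
proof (cases rule: bc_prog_cases)
  case (dynamic h' A C j)
  from dynamic(1) show ?thesis
    by (cases rule: bc_enc_dyn_cases) (use dynamic assms(2) in auto)
qed (use assms(2) in auto)

lemma stable_fluent_typed:
  assumes "stable_model (bc_prog bcW l) X" "Pos (FAt i f w) \<in> X"
  shows "i \<le> l \<and> f \<in> enc_fluents W \<and> w \<in> bdom bcW f"
  using stable_model_supported[OF assms] bc_enc_head_typed by metis

lemma stable_value_unique:
  assumes "stable_model (bc_prog bcW l) X" "Pos (FAt i f w) \<in> X" "Pos (FAt i f w') \<in> X"
  shows "w = w'"
  using bc_stable_value_unique[OF assms(1) _ _ _ _ assms(2,3)] stable_fluent_typed[OF assms(1)]
    assms(2,3) by simp

lemma stable_sigma_eq_enc_state: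
  assumes "stable_model (bc_prog bcW l) X" "typed_state W s"
    and "\<And>f. f \<in> enc_fluents W \<Longrightarrow> Pos (FAt i f (fluent_val s f)) \<in> X"
  shows "sigma i X = enc_state W s"
proof (rule set_eqI, clarify)
  fix f w
  show "(f, w) \<in> sigma i X \<longleftrightarrow> (f, w) \<in> enc_state W s"
    using stable_fluent_typed[OF assms(1)] stable_value_unique[OF assms(1)] assms(3)
    by (auto simp: sigma_def)
qed

lemma stable_sigma_0:
  assumes "stable_model (bc_prog bcW l) X"
  shows "sigma 0 X = enc_state W (rg_init W)"
proof (rule stable_sigma_eq_enc_state[OF assms typed_state_rg_init])
  fix f assume "f \<in> enc_fluents W"
  then have "(f, fluent_val (rg_init W) f) \<in> binit bcW"
    using bc_enc_init_iff[OF pstart_in_places] by blast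
  then show "Pos (FAt 0 f (fluent_val (rg_init W) f)) \<in> X"
    using stable_model_closed[OF assms bc_prog_initI] by blast
qed

end

section \<open>From answer sets to firings\<close>

locale answer_set_step = dawnet_encoding W dnf
  for W :: "('v, 'd, 'p, 't) dawnet" and dnf +
  fixes s :: "('v, 'd, 'p) dstate" and l :: nat and X
  assumes reachable: "s \<in> rg_states W"
    and stable: "stable_model (bc_prog bcW (Suc l)) X"
    and current: "sigma l X = enc_state W s"
begin

lemma current_value: "Pos (FAt l f w) \<in> X \<longleftrightarrow> f \<in> enc_fluents W \<and> w = fluent_val s f"
  using current by (rule sigma_enc_state_iff)

lemma dyn_law_applies:
  assumes "(h, A, C) \<in> bdyn bcW" "after_lit l ` A \<subseteq> X" "neg_at (Suc l) C \<inter> X = {}"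
  shows "head_lits (Suc l) h \<inter> X \<noteq> {}"
  using bc_stable_dyn_law[OF stable assms(1) lessI assms(2,3)] .

lemma next_value_exists: "f \<in> enc_fluents W \<Longrightarrow> \<exists>w. Pos (FAt (Suc l) f w) \<in> X"
  using bc_stable_value_exists[OF stable, of f "Suc l"] by auto

lemma next_value_cases:
  assumes "Pos (FAt (Suc l) f w) \<in> X"
  shows "f \<noteq> FlTrans \<and> Pos (FAt l f w) \<in> X \<or> (\<exists>t. Pos (AAt l t) \<in> X \<and> effect W t f w)"
proof -
  obtain h b n where "(h, b, n) \<in> bc_prog bcW (Suc l)" "b \<subseteq> X" "Pos (FAt (Suc l) f w) \<in> h"
    using stable_model_supported[OF stable assms] by metis
  then show ?thesis using bc_enc_successor_head by blast
qed

lemma action_in_transs: "Pos (AAt l t) \<in> X \<Longrightarrow> t \<in> transs W"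
  using stable_model_supported[OF stable] bc_prog_action_head by (metis bc_enc_simps(2))

lemma action_exists:
  obtains t where "Pos (AAt l t) \<in> X"
proof -
  obtain w where "Pos (FAt (Suc l) FlTrans w) \<in> X" using next_value_exists[of FlTrans] by auto
  then show ?thesis using next_value_cases that by blast
qed

lemma action_unique:
  assumes "Pos (AAt l t) \<in> X" "Pos (AAt l t') \<in> X"
  shows "t = t'"
proof (rule ccontr)
  assume "t \<noteq> t'"
  then have "(None, {Inr t, Inr t'}, {}) \<in> bdyn bcW"
    using assms action_in_transs by (intro bc_enc_concurrency_constraint)
  from dyn_law_applies[OF this] assms show False by (simp add: neg_at_def)
qed

lemma next_value_inertial:
  assumes "Pos (AAt l t) \<in> X" "inertial W t f" "Pos (FAt (Suc l) f w) \<in> X"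
  shows "w = fluent_val s f"
proof -
  consider "Pos (FAt l f w) \<in> X" | t' where "Pos (AAt l t') \<in> X" "effect W t' f w"
    using next_value_cases[OF assms(3)] by blast
  then show ?thesis
  proof cases
    case 1
    then show ?thesis by (simp add: current_value)
  next
    case 2
    then have "effect W t f w" using action_unique[OF assms(1) 2(1)] by simp
    then show ?thesis using not_inertial_iff_effect[of W t f] assms(2) by blast
  qed
qed

lemma effect_caused:
  assumes "Pos (AAt l t) \<in> X" "effect W t f w" "w \<notin> range Val"
  shows "Pos (FAt (Suc l) f w) \<in> X"
  using dyn_law_applies[OF bc_enc_effect_law[OF action_in_transs[OF assms(1)] assms(2)]]
    assms by (simp add: neg_at_def)

lemma written_value:
  assumes "Pos (AAt l t) \<in> X" "wr W t v = Some S" "S \<noteq> {}" "Pos (FAt (Suc l) (FlVar v) w) \<in> X"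
  shows "w \<in> Val ` S"
proof (rule ccontr)
  assume "w \<notin> Val ` S"
  moreover have "w \<in> Val ` adm W v \<union> {Null}" using stable_fluent_typed[OF stable assms(4)] by simp
  ultimately have "(None, {Inr t}, {(FlVar v, w)}) \<in> bdyn bcW"
    using action_in_transs[OF assms(1)] assms(2,3) by (intro bc_enc_write_constraint) auto
  from dyn_law_applies[OF this] show False
    using assms(1,4) stable_model_consistent[OF stable] by (auto simp: neg_at_def)
qed

lemma action_enabled:
  assumes "Pos (AAt l t) \<in> X"
  shows "preset W t \<subseteq> {p. 0 < fst s p}"
proof
  fix p assume p: "p \<in> preset W t"
  show "p \<in> {p. 0 < fst s p}"
  proof (rule ccontr)
    assume "p \<notin> {p. 0 < fst s p}"
    then have "Pos (FAt l (FlPlace p) BFalse) \<in> X"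
      using current_value p preset_subset_places by (cases s) auto
    then show False
      using dyn_law_applies[OF bc_enc_enabling_constraint[OF action_in_transs[OF assms] p]]
        assms by (simp add: neg_at_def)
  qed
qed

lemma action_guard:
  assumes "Pos (AAt l t) \<in> X"
  shows "holds (dmodel W) (snd s) (gd W t)"
proof (rule ccontr)
  obtain M \<eta> where s: "s = (M, \<eta>)" by fastforce
  have t: "t \<in> transs W" using action_in_transs[OF assms] .
  assume fails: "\<not> holds (dmodel W) (snd s) (gd W t)"
  then have invalid: "\<not> guard_valid (dmodel W) (gd W t)"
    using typed_state_assignment rg_states_typed[OF reachable] by (auto simp: s guard_valid_def)
  then obtain c where "c \<in> set (dnf t)" "dnf_lit_tr ` set c \<subseteq> enc_state W s"
    using guard_fails_iff_clause[OF t] fails rg_states_typed[OF reachable] by (auto simp: s)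
  then show False
    using dyn_law_applies[OF bc_enc_guard_constraint[OF t invalid]] assms
    by (simp add: neg_at_def image_Un after_lit_Inl_subset_iff current)
qed

text \<open>The assignment read off step \<open>l + 1\<close>; values are unique there, so the choice is determined.\<close>

definition next_assignment :: "'v \<Rightarrow> 'd option" where
  "next_assignment v = (if \<exists>d. Pos (FAt (Suc l) (FlVar v) (Val d)) \<in> X
     then Some (SOME d. Pos (FAt (Suc l) (FlVar v) (Val d)) \<in> X) else None)"

lemma fluent_val_next_assignment:
  assumes "Pos (FAt (Suc l) (FlVar v) w) \<in> X"
  shows "fluent_val (M', next_assignment) (FlVar v) = w"
proof -
  have w: "w \<in> Val ` adm W v \<union> {Null}" using stable_fluent_typed[OF stable assms] by simp
  have unique: "w' = w" if "Pos (FAt (Suc l) (FlVar v) w') \<in> X" for w'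
    using stable_value_unique[OF stable that assms] .
  show ?thesis
  proof (cases "\<exists>d. Pos (FAt (Suc l) (FlVar v) (Val d)) \<in> X")
    case True
    then have "Pos (FAt (Suc l) (FlVar v) (Val (SOME d. Pos (FAt (Suc l) (FlVar v) (Val d)) \<in> X)))
        \<in> X"
      by (rule someI_ex)
    then show ?thesis using True unique by (simp add: next_assignment_def)
  next
    case False
    then show ?thesis using w assms by (auto simp: next_assignment_def)
  qed
qed

lemma next_assignment_undefined:
  assumes "v \<notin> Vprime W"
  shows "next_assignment v = None"
proof -
  have "Pos (FAt (Suc l) (FlVar v) (Val d)) \<notin> X" for d
    using stable_fluent_typed[OF stable, of "Suc l" "FlVar v" "Val d"] assms by auto
  then show ?thesis by (simp add: next_assignment_def)
qed

lemma next_assignment_writes: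
  assumes "Pos (AAt l t) \<in> X"
  shows "wr W t v = None \<Longrightarrow> next_assignment v = snd s v"
    and "wr W t v = Some {} \<Longrightarrow> next_assignment v = None"
    and "wr W t v = Some S \<Longrightarrow> S \<noteq> {} \<Longrightarrow> \<exists>d \<in> S. next_assignment v = Some d"
proof -
  obtain M \<eta> where s: "s = (M, \<eta>)" by fastforce
  have t: "t \<in> transs W" using action_in_transs[OF assms] .
  show "next_assignment v = snd s v" if keep: "wr W t v = None"
  proof (cases "v \<in> Vprime W")
    case True
    then obtain w where w: "Pos (FAt (Suc l) (FlVar v) w) \<in> X"
      using next_value_exists[of "FlVar v"] by auto
    then have "w = fluent_val s (FlVar v)" using next_value_inertial[OF assms] keep by simp
    then have "fluent_val (M, next_assignment) (FlVar v) = fluent_val (M, \<eta>) (FlVar v)"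
      using fluent_val_next_assignment[OF w] s by simp
    then show ?thesis unfolding fluent_val_FlVar_eq_iff using s by simp
  next
    case False
    then show ?thesis
      using next_assignment_undefined rg_states_typed[OF reachable] by (simp add: typed_state_def)
  qed
  show "next_assignment v = None" if clear: "wr W t v = Some {}"
  proof -
    have "effect W t (FlVar v) Null" using clear by simp
    then have "Pos (FAt (Suc l) (FlVar v) Null) \<in> X" using effect_caused[OF assms] by blast
    from fluent_val_next_assignment[OF this, of M] show ?thesis by (simp split: option.splits)
  qed
  show "\<exists>d \<in> S. next_assignment v = Some d" if written: "wr W t v = Some S" "S \<noteq> {}"
  proof -
    obtain w where w: "Pos (FAt (Suc l) (FlVar v) w) \<in> X"
      using next_value_exists[of "FlVar v"] wr_in_Vprime[OF t written(1)] by auto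
    then obtain d where "d \<in> S" "w = Val d" using written_value[OF assms written] by blast
    then show ?thesis using fluent_val_next_assignment[OF w, of M] by (auto split: option.splits)
  qed
qed

lemma next_state_value:
  assumes "Pos (AAt l t) \<in> X" and firing: "valid_firing W s t (M', next_assignment)"
    and "f \<in> enc_fluents W"
  shows "Pos (FAt (Suc l) f (fluent_val (M', next_assignment) f)) \<in> X"
proof -
  obtain w where w: "Pos (FAt (Suc l) f w) \<in> X" using next_value_exists assms(3) by blast
  have safe: "\<forall>p. fst s p \<le> 1" using rg_states_safe[OF reachable] by blast
  show ?thesis
  proof (cases "\<exists>v. f = FlVar v")
    case True
    then show ?thesis using fluent_val_next_assignment w by auto
  next
    case False
    show ?thesis
    proof (cases "inertial W t f")
      case True
      then have "w = fluent_val s f" using next_value_inertial[OF assms(1) _ w] by simp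
      then show ?thesis using w fluent_val_inertial[OF firing True] by simp
    next
      case affected: False
      have "effect W t f (fluent_val (M', next_assignment) f)"
        using fluent_val_effect[OF firing safe affected] .
      moreover have "fluent_val (M', next_assignment) f \<notin> range Val" using False by (cases f) auto
      ultimately show ?thesis using effect_caused[OF assms(1)] by blast
    qed
  qed
qed

theorem step_back:
  obtains t s' where "valid_firing W s t s'" "{a. Pos (AAt l a) \<in> X} = {t}"
    "sigma (Suc l) X = enc_state W s'"
proof -
  obtain t where t: "Pos (AAt l t) \<in> X" by (rule action_exists)
  obtain M \<eta> where s: "s = (M, \<eta>)" by fastforce
  let ?s' = "(next_marking W t M, next_assignment)"
  have firing: "valid_firing W s t ?s'"
    unfolding s valid_firing_iff
  proof (intro conjI allI impI)
    show "t \<in> transs W" by (rule action_in_transs[OF t])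
    show "preset W t \<subseteq> {p. 0 < M p}" using action_enabled[OF t] by (simp add: s)
    show "holds (dmodel W) \<eta> (gd W t)" using action_guard[OF t] by (simp add: s)
    fix v S
    show "wr W t v = None \<Longrightarrow> next_assignment v = \<eta> v"
      using next_assignment_writes(1)[OF t] by (simp add: s)
    show "wr W t v = Some {} \<Longrightarrow> next_assignment v = None"
      by (rule next_assignment_writes(2)[OF t])
    show "wr W t v = Some S \<Longrightarrow> S \<noteq> {} \<Longrightarrow> \<exists>d \<in> S. next_assignment v = Some d"
      by (rule next_assignment_writes(3)[OF t])
  qed simp
  moreover have "{a. Pos (AAt l a) \<in> X} = {t}" using t action_unique by blast
  moreover have "sigma (Suc l) X = enc_state W ?s'"
  proof (rule stable_sigma_eq_enc_state[OF stable])
    show "typed_state W ?s'"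
      using typed_state_valid_firing[OF rg_states_typed[OF reachable] firing] .
    show "\<And>f. f \<in> enc_fluents W \<Longrightarrow> Pos (FAt (Suc l) f (fluent_val ?s' f)) \<in> X"
      by (rule next_state_value[OF t firing])
  qed
  ultimately show ?thesis by (rule that)
qed

end

section \<open>From firing sequences to answer sets\<close>

locale firing_sequence = dawnet_encoding W dnf
  for W :: "('v, 'd, 'p, 't) dawnet" and dnf +
  fixes ss :: "nat \<Rightarrow> ('v, 'd, 'p) dstate" and ts :: "nat \<Rightarrow> 't" and n :: nat
  assumes start: "ss 0 = rg_init W"
    and fires: "\<And>i. i < n \<Longrightarrow> valid_firing W (ss i) (ts i) (ss (Suc i))"
begin

definition history :: "(('v, 'p) fluent, 'd fval, 't) patom lit set" where
  "history =
     {Pos (FAt i f (fluent_val (ss i) f)) | i f. i \<le> n \<and> f \<in> enc_fluents W}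
   \<union> {Neg (FAt i f w) | i f w. i \<le> n \<and> f \<in> enc_fluents W \<and> w \<in> bdom bcW f \<and> w \<noteq> fluent_val (ss i) f}
   \<union> {Pos (AAt i (ts i)) | i. i < n}
   \<union> {Neg (AAt i a) | i a. i < n \<and> a \<in> transs W \<and> a \<noteq> ts i}"

lemma history_simps [simp]:
  "Pos (FAt i f w) \<in> history \<longleftrightarrow> i \<le> n \<and> f \<in> enc_fluents W \<and> w = fluent_val (ss i) f"
  "Neg (FAt i f w) \<in> history \<longleftrightarrow>
     i \<le> n \<and> f \<in> enc_fluents W \<and> w \<in> bdom bcW f \<and> w \<noteq> fluent_val (ss i) f"
  "Pos (AAt i a) \<in> history \<longleftrightarrow> i < n \<and> a = ts i"
  "Neg (AAt i a) \<in> history \<longleftrightarrow> i < n \<and> a \<in> transs W \<and> a \<noteq> ts i"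
  by (auto simp: history_def)

lemma reachable: "i \<le> n \<Longrightarrow> ss i \<in> rg_states W"
proof (induction i)
  case (Suc i)
  then show ?case using rg_states.rg_step[OF _ fires[of i]] by simp
qed (simp add: start rg_states.rg_init_in)

lemma fluent_val_in_bdom_at: "i \<le> n \<Longrightarrow> f \<in> enc_fluents W \<Longrightarrow> fluent_val (ss i) f \<in> bdom bcW f"
  using fluent_val_in_bdom rg_states_typed reachable by blast

lemma fired_transition:
  assumes "i < n"
  shows fired_in_transs: "ts i \<in> transs W"
    and fired_enabled: "preset W (ts i) \<subseteq> {p. 0 < fst (ss i) p}"
    and fired_guard: "holds (dmodel W) (snd (ss i)) (gd W (ts i))"
  using fires[OF assms] by (cases "ss i"; cases "ss (Suc i)"; simp add: valid_firing_iff)+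

lemma safe_at: "i \<le> n \<Longrightarrow> \<forall>p. fst (ss i) p \<le> 1"
  using rg_states_safe reachable by blast

lemma step_inertial: "i < n \<Longrightarrow> inertial W (ts i) f \<Longrightarrow> fluent_val (ss (Suc i)) f = fluent_val (ss i) f"
  using fluent_val_inertial[OF fires] by simp

lemma step_effect: "i < n \<Longrightarrow> \<not> inertial W (ts i) f \<Longrightarrow> effect W (ts i) f (fluent_val (ss (Suc i)) f)"
  using fluent_val_effect[OF fires safe_at] by simp

lemma sigma_history: "i \<le> n \<Longrightarrow> sigma i history = enc_state W (ss i)"
  by (auto simp: sigma_def)

lemma history_consistent: "consistent history"
  unfolding consistent_def
proof clarify
  fix a assume "Pos a \<in> history" "Neg a \<in> history"
  then show False by (cases a) auto
qed

lemma history_action_body: "after_lit i ` A \<subseteq> history \<Longrightarrow> Inr t \<in> A \<Longrightarrow> t = ts i"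
  by force

lemma history_ifcons_value:
  assumes "i < n" "neg_at (Suc i) {(f, w)} \<inter> history = {}" "f \<in> enc_fluents W" "w \<in> bdom bcW f"
  shows "w = fluent_val (ss (Suc i)) f"
  using assms by (auto simp: neg_at_def)

lemma history_effect_law:
  assumes law: "(Some (f, w), A, C) \<in> bdyn bcW" and i: "i < n"
    and body: "after_lit i ` A \<subseteq> history" and ifcons: "neg_at (Suc i) C \<inter> history = {}"
  shows "Pos (FAt (Suc i) f w) \<in> history"
  using law
proof (cases rule: bc_enc_dyn_cases)
  case inertia
  then show ?thesis using history_ifcons_value[OF i] ifcons i by simp
next
  case (effect t)
  then have f: "f \<in> enc_fluents W" "w \<in> bdom bcW f" using effect_in_bdom by auto
  have "w = fluent_val (ss (Suc i)) f"
  proof (cases "w \<in> range Val")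
    case False
    have eff: "effect W (ts i) f w" using effect history_action_body[OF body] by simp
    then have "\<not> inertial W (ts i) f" using not_inertial_iff_effect[of W "ts i" f] by blast
    from effect_determined[OF eff step_effect[OF i this] False] show ?thesis by simp
  qed (use effect f history_ifcons_value[OF i] ifcons in simp)
  then show ?thesis using f i by simp
qed simp_all

lemma history_constraint:
  assumes law: "(None, A, C) \<in> bdyn bcW" and i: "i < n"
    and body: "after_lit i ` A \<subseteq> history" and ifcons: "neg_at (Suc i) C \<inter> history = {}"
  shows False
  using law
proof (cases rule: bc_enc_dyn_cases)
  case (write_constraint t v S w)
  have "v \<in> Vprime W" using wr_in_Vprime[OF write_constraint(1,2)] .
  moreover have "w \<in> Val ` adm W v \<union> {Null}" using write_constraint(4) by blast
  ultimately have "w = fluent_val (ss (Suc i)) (FlVar v)"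
    using history_ifcons_value[OF i] ifcons write_constraint(7) by simp
  moreover have "effect W (ts i) (FlVar v) (fluent_val (ss (Suc i)) (FlVar v))"
    using write_constraint history_action_body[OF body] by (intro step_effect[OF i]) simp
  ultimately show ?thesis using write_constraint history_action_body[OF body] by auto
next
  case (enabling_constraint t p)
  obtain M \<eta> where s: "ss i = (M, \<eta>)" by fastforce
  have "Pos (FAt i (FlPlace p) BFalse) \<in> history" "t = ts i" using body enabling_constraint by auto
  then have "\<not> 0 < M p" "p \<in> preset W (ts i)" using s enabling_constraint by (auto split: if_splits)
  then show ?thesis using fired_enabled[OF i] s by auto
next
  case (guard_constraint t c)
  obtain M \<eta> where s: "ss i = (M, \<eta>)" by fastforce
  have "typed_state W (M, \<eta>)" using rg_states_typed reachable i s by (metis less_imp_le)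
  moreover have "dnf_lit_tr ` set c \<subseteq> enc_state W (M, \<eta>)"
    using body i guard_constraint s by (simp add: image_Un after_lit_Inl_subset_iff sigma_history)
  ultimately have "\<not> holds (dmodel W) \<eta> (gd W t)"
    using guard_fails_iff_clause[OF guard_constraint(1,2)] guard_constraint(3) by blast
  moreover have "t = ts i" using history_action_body[OF body] guard_constraint by simp
  ultimately show ?thesis using fired_guard[OF i] s by simp
qed (use body in auto)

lemma history_closed: "closed_under (reduct (bc_prog bcW n) history) history"
proof (rule closed_under_reductI)
  fix h b m assume rule: "(h, b, m) \<in> bc_prog bcW n" and ifcons: "m \<inter> history = {}"
    and body: "b \<subseteq> history"
  from rule show "h \<inter> history \<noteq> {}"
  proof (cases rule: bc_prog_cases)
    case (dynamic h' A C i)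
    show ?thesis
    proof (cases h')
      case None
      then show ?thesis using history_constraint dynamic ifcons body by blast
    next
      case (Some fw)
      then obtain f w where "h' = Some (f, w)" by (cases fw) auto
      then show ?thesis using history_effect_law dynamic ifcons body by auto
    qed
  next
    case (init f w)
    then show ?thesis using bc_enc_init_iff[OF pstart_in_places] start by simp
  next
    case (fluent_choice f w)
    then show ?thesis by (cases "w = fluent_val (ss 0) f") auto
  next
    case (action_choice a i)
    then show ?thesis by (cases "a = ts i") auto
  next
    case (value_exists f i)
    then have "Pos (FAt i f (fluent_val (ss i) f)) \<in> m \<inter> history"
      using fluent_val_in_bdom_at by simp
    then show ?thesis using ifcons by simp
  next
    case (value_unique f w' w i)
    then show ?thesis using body by simp
  qed simp
qed

context
  fixes Y
  assumes Y_subset: "Y \<subseteq> history"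
    and Y_closed: "closed_under (reduct (bc_prog bcW n) history) Y"
begin

lemma derived_action: "i < n \<Longrightarrow> Pos (AAt i (ts i)) \<in> Y"
  using closed_under_reductD[OF Y_closed bc_prog_action_choiceI[of "ts i" bcW i n]]
    fired_in_transs Y_subset by auto

lemma derived_value: "i \<le> n \<Longrightarrow> f \<in> enc_fluents W \<Longrightarrow> Pos (FAt i f (fluent_val (ss i) f)) \<in> Y"
proof (induction i arbitrary: f)
  case 0
  then have "(f, fluent_val (ss 0) f) \<in> binit bcW"
    using bc_enc_init_iff[OF pstart_in_places] start by simp
  from closed_under_reductD[OF Y_closed bc_prog_initI[OF this]] show ?case by simp
next
  case (Suc i)
  then have i: "i < n" by simp
  show ?case
  proof (cases "inertial W (ts i) f")
    case True
    let ?w = "fluent_val (ss i) f"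
    have law: "(Some (f, ?w), {Inl (f, ?w)}, {(f, ?w)}) \<in> bdyn bcW"
      using True Suc.prems(2) fluent_val_in_bdom_at[of i f] i by (intro bc_enc_inertia_law) auto
    have "Pos (FAt i f ?w) \<in> Y" using Suc.IH i Suc.prems(2) by simp
    moreover have "Neg (FAt (Suc i) f ?w) \<notin> history" using step_inertial[OF i True] by simp
    ultimately have "Pos (FAt (Suc i) f ?w) \<in> Y"
      using closed_under_reductD[OF Y_closed bc_prog_dynI[OF law i]] by (simp add: neg_at_def)
    then show ?thesis using step_inertial[OF i True] by simp
  next
    case False
    let ?w = "fluent_val (ss (Suc i)) f"
    have law: "(Some (f, ?w), {Inr (ts i)}, if ?w \<in> range Val then {(f, ?w)} else {}) \<in> bdyn bcW"
      using bc_enc_effect_law[OF fired_in_transs[OF i] step_effect[OF i False]] .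
    have "neg_at (Suc i) (if ?w \<in> range Val then {(f, ?w)} else {}) \<inter> history = {}"
      by (simp add: neg_at_def)
    then show ?thesis
      using closed_under_reductD[OF Y_closed bc_prog_dynI[OF law i]] derived_action[OF i] by simp
  qed
qed

lemma history_minimal: "history \<subseteq> Y"
proof
  fix x assume x: "x \<in> history"
  show "x \<in> Y"
  proof (cases x)
    case (Pos a)
    then show ?thesis using x derived_value derived_action by (cases a) auto
  next
    case (Neg a)
    show ?thesis
    proof (cases a)
      case (FAt i f w)
      then have i: "i \<le> n" and f: "f \<in> enc_fluents W"
        and w: "w \<in> bdom bcW f" "w \<noteq> fluent_val (ss i) f"
        using x Neg by auto
      have "({Neg (FAt i f w)}, {Pos (FAt i f (fluent_val (ss i) f))}, {}) \<in> bc_prog bcW n"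
        using f w i fluent_val_in_bdom_at[OF i f] by (intro bc_prog_value_uniqueI) auto
      from closed_under_reductD[OF Y_closed this] show ?thesis
        using derived_value[OF i f] Neg FAt by simp
    next
      case (AAt i a)
      then have "i < n" "a \<in> transs W" "Pos (AAt i a) \<notin> Y" using x Neg Y_subset by auto
      then have "({Pos (AAt i a), Neg (AAt i a)}, {}, {}) \<in> bc_prog bcW n"
        by (intro bc_prog_action_choiceI) auto
      from closed_under_reductD[OF Y_closed this] show ?thesis
        using \<open>Pos (AAt i a) \<notin> Y\<close> Neg AAt by auto
    qed
  qed
qed

end

lemma history_stable: "stable_model (bc_prog bcW n) history"
  using history_consistent history_closed history_minimal by (rule stable_modelI)

lemma firing_sequence_prefix: "m \<le> n \<Longrightarrow> firing_sequence W dnf ss ts m"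
  by (intro firing_sequence.intro dawnet_encoding_axioms firing_sequence_axioms.intro)
    (auto simp: start intro: fires)

lemma enc_state_in_ts_init: "enc_state W (ss 0) \<in> ts_init bcW"
proof -
  interpret prefix: firing_sequence W dnf ss ts 0 by (rule firing_sequence_prefix) simp
  show ?thesis
    unfolding ts_init_def using prefix.history_stable prefix.sigma_history[of 0] by auto
qed

lemma enc_state_in_ts_states: "i \<le> n \<Longrightarrow> enc_state W (ss i) \<in> ts_states bcW"
proof (induction i)
  case 0
  interpret prefix: firing_sequence W dnf ss ts 0 by (rule firing_sequence_prefix) simp
  show ?case using ts_states.ts_init_in[OF prefix.history_stable] prefix.sigma_history by simp
next
  case (Suc i)
  interpret prefix: firing_sequence W dnf ss ts "Suc i"
    using Suc.prems by (rule firing_sequence_prefix)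
  have "sigma i prefix.history \<in> ts_states bcW" using Suc prefix.sigma_history by simp
  from ts_states.ts_step[OF prefix.history_stable this] show ?case
    using prefix.sigma_history by simp
qed

lemma enc_step_in_ts_delta:
  assumes "i < n"
  shows "(enc_state W (ss i), {ts i}, enc_state W (ss (Suc i))) \<in> ts_delta bcW"
proof -
  interpret prefix: firing_sequence W dnf ss ts "Suc i"
    using assms by (intro firing_sequence_prefix) simp
  have "(sigma i prefix.history, {a. Pos (AAt i a) \<in> prefix.history}, sigma (Suc i) prefix.history)
      \<in> ts_delta bcW"
    unfolding ts_delta_def mem_Collect_eq
    using prefix.history_stable prefix.sigma_history[of i] enc_state_in_ts_states[of i] assms
    by (intro exI[of _ i] exI[of _ prefix.history]) auto
  moreover have "{a. Pos (AAt i a) \<in> prefix.history} = {ts i}" by auto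
  ultimately show ?thesis using prefix.sigma_history by simp
qed

end

lemma lts_run_conv_nth:
  "lts_run \<delta> s xs \<longleftrightarrow> (\<forall>i < length xs. ((s # map snd xs) ! i, fst (xs ! i), map snd xs ! i) \<in> \<delta>)"
proof (induction xs arbitrary: s)
  case (Cons x xs)
  then show ?case by (cases x) (simp add: All_less_Suc2)
qed simp

lemma lts_run_mapI:
  assumes "\<And>i. i < length xs \<Longrightarrow> (g ((s # map snd xs) ! i), h (fst (xs ! i)), g (map snd xs ! i)) \<in> \<delta>"
  shows "lts_run \<delta> (g s) (map (\<lambda>(l, s). (h l, g s)) xs)"
  using assms
proof (induction xs arbitrary: s)
  case (Cons x xs)
  obtain l s' where x: "x = (l, s')" by fastforce
  have "(g s, h l, g s') \<in> \<delta>" using Cons.prems[of 0] x by simp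
  moreover have "lts_run \<delta> (g s') (map (\<lambda>(l, s). (h l, g s)) xs)"
    using Cons.prems[of "Suc _"] x by (intro Cons.IH) simp
  ultimately show ?case using x by simp
qed simp

lemma lts_run_lift:
  assumes step: "\<And>s l' s2. s \<in> S \<Longrightarrow> (f s, l', s2) \<in> \<delta>' \<Longrightarrow>
      \<exists>l s'. (s, l, s') \<in> \<delta> \<and> s' \<in> S \<and> g l = l' \<and> f s' = s2"
    and "s \<in> S" "lts_run \<delta>' (f s) ys"
  shows "\<exists>xs. lts_run \<delta> s xs \<and> map (\<lambda>(l, s). (g l, f s)) xs = ys"
  using assms(2,3)
proof (induction ys arbitrary: s)
  case (Cons y ys)
  obtain l' s2 where y: "y = (l', s2)" by fastforce
  have "(f s, l', s2) \<in> \<delta>'" and run: "lts_run \<delta>' s2 ys" using Cons.prems(2) y by auto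
  then obtain l s' where l: "(s, l, s') \<in> \<delta>" "s' \<in> S" "g l = l'" "f s' = s2"
    using step Cons.prems(1) by blast
  moreover obtain xs where "lts_run \<delta> s' xs" "map (\<lambda>(l, s). (g l, f s)) xs = ys"
    using Cons.IH[OF l(2)] run l(4) by auto
  ultimately show ?case by (intro exI[of _ "(l, s') # xs"]) (simp add: y)
qed simp

context dawnet_encoding
begin

lemma rg_path_encoded:
  assumes "lts_path {rg_init W} (rg_delta W) s0 xs"
  shows "lts_path (ts_init bcW) (ts_delta bcW) (enc_state W s0)
    (map (\<lambda>(t, s). ({t}, enc_state W s)) xs)"
proof -
  define ss where "ss i = (s0 # map snd xs) ! i" for i
  define ts where "ts i = fst (xs ! i)" for i
  have start: "s0 = rg_init W" and run: "lts_run (rg_delta W) s0 xs"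
    using assms by (auto simp: lts_path_def)
  have "firing_sequence W dnf ss ts (length xs)"
    using start run unfolding lts_run_conv_nth
    by (intro firing_sequence.intro dawnet_encoding_axioms firing_sequence_axioms.intro)
      (auto simp: ss_def ts_def rg_delta_def)
  then interpret run: firing_sequence W dnf ss ts "length xs" .
  have "enc_state W s0 \<in> ts_init bcW" using run.enc_state_in_ts_init by (simp add: ss_def)
  moreover have "lts_run (ts_delta bcW) (enc_state W s0) (map (\<lambda>(t, s). ({t}, enc_state W s)) xs)"
    using run.enc_step_in_ts_delta by (intro lts_run_mapI) (simp add: ss_def ts_def)
  ultimately show ?thesis by (simp add: lts_path_def)
qed

lemma ts_delta_step_back:
  assumes "s \<in> rg_states W" "(enc_state W s, L, S') \<in> ts_delta bcW"
  shows "\<exists>t s'. (s, t, s') \<in> rg_delta W \<and> s' \<in> rg_states W \<and> {t} = L \<and> enc_state W s' = S'"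
proof -
  obtain l X where X: "enc_state W s = sigma l X" "L = {a. Pos (AAt l a) \<in> X}"
      "S' = sigma (Suc l) X" "stable_model (bc_prog bcW (Suc l)) X"
    using assms(2) unfolding ts_delta_def by blast
  then have "answer_set_step W dnf s l X"
    using assms(1)
    by (intro answer_set_step.intro dawnet_encoding_axioms answer_set_step_axioms.intro) auto
  then obtain t s' where "valid_firing W s t s'" "{a. Pos (AAt l a) \<in> X} = {t}"
      "sigma (Suc l) X = enc_state W s'"
    by (rule answer_set_step.step_back)
  then show ?thesis
    using assms(1) X
    by (intro exI[of _ t] exI[of _ s']) (auto simp: rg_delta_def intro: rg_states.rg_step)
qed

theorem trace_equivalent_rg_bc:
  "trace_equivalent {rg_init W} (rg_states W) (transs W) (rg_delta W) (ts_init bcW) (ts_delta bcW)"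
  unfolding trace_equivalent_def
proof (intro exI[of _ "enc_state W"] exI[of _ "\<lambda>t. {t}"] conjI allI impI)
  show "inj_on (enc_state W) (rg_states W)" by (rule enc_state_inj_on)
  show "inj_on (\<lambda>t. {t}) (transs W)" by simp
  fix s0 xs assume "lts_path {rg_init W} (rg_delta W) s0 xs"
  then show "lts_path (ts_init bcW) (ts_delta bcW) (enc_state W s0)
      (map (\<lambda>(l, s). ({l}, enc_state W s)) xs)"
    by (rule rg_path_encoded)
next
  fix s0' ys assume "lts_path (ts_init bcW) (ts_delta bcW) s0' ys"
  then obtain X where "stable_model (bc_prog bcW 0) X" "s0' = sigma 0 X"
    and run: "lts_run (ts_delta bcW) s0' ys"
    unfolding lts_path_def ts_init_def by blast
  then have "s0' = enc_state W (rg_init W)" using stable_sigma_0 by simp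
  then obtain xs where "lts_run (rg_delta W) (rg_init W) xs"
      "map (\<lambda>(l, s). ({l}, enc_state W s)) xs = ys"
    using lts_run_lift[OF ts_delta_step_back rg_states.rg_init_in] run by blast
  then show "\<exists>s0 xs. lts_path {rg_init W} (rg_delta W) s0 xs \<and> enc_state W s0 = s0' \<and>
      map (\<lambda>(l, s). ({l}, enc_state W s)) xs = ys"
    using \<open>s0' = enc_state W (rg_init W)\<close> by (auto simp: lts_path_def)
qed

end

theorem mainTheorem1:
  fixes W :: "('v, 'd, 'p, 't) dawnet"
    and dnf :: "'t \<Rightarrow> ('v, 'd) dnf_lit list list"
  assumes "wf_dawnet W"
    and "one_safe W"
    and "\<forall>t \<in> transs W. \<not> guard_valid (dmodel W) (gd W t) \<longrightarrow>
            dnf_char (dmodel W) (GNot (gd W t)) (dnf t) \<and>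
            (\<forall>c \<in> set (dnf t). \<forall>l \<in> set c. dnf_lit_var l \<in> Vprime W)"
  shows "trace_equivalent {rg_init W} (rg_states W) (transs W) (rg_delta W)
           (ts_init (bc_enc W dnf)) (ts_delta (bc_enc W dnf))"
proof -
  interpret dawnet_encoding W dnf using assms by (rule dawnet_encoding.intro)
  show ?thesis by (rule trace_equivalent_rg_bc)
qed

end
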